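(* Let $I\subset[n]$ and $m=\#I$. Then the map $$\mathbb Z_2^m\backslash\mathrm{SPI}_m\to\mathbb Z_2^n\backslash\Omega^I_n/(\mathbb Z_2^n\rtimes\mathfrak S_n),\qquad \tau\mapsto \mathbb Z_2^n\,h(\sigma_I)\begin{pmatrix}\tau&0\\0&\mathbf 1_{n-m}\\\mathbf 1_m&0\\0&0\end{pmatrix}(\mathbb Z_2^n\rtimes\mathfrak S_n)$$ is a well-defined bijection.
   Context: $\mathrm{SPP}_k$: $k\times k$ integer matrices with entries in $\{-1,0,1\}$ and at most one nonzero entry per row and column. $\mathrm{SPI}_m=\mathrm{SPP}_m\cap\mathrm{Sym}_m(\mathbb Z)$; $\varepsilon=\mathrm{diag}(\varepsilon_1,\dots,\varepsilon_m)\in\mathbb Z_2^m=\{\pm1\}^m$ acts on $\mathrm{SPI}_m$ by $\tau\mapsto\varepsilon\tau\varepsilon$. $\Omega^\circ_n$ is the set of $\begin{pmatrix}\tau_1\\\tau_2\end{pmatrix}\in\mathrm M_{2n,n}(\mathbb Z)$ with $\tau_1,\tau_2\in\mathrm{SPP}_n$, $\tau_1^t\tau_2$ symmetric, of rank $n$. For $D\in\mathrm M_n$, $\mathrm{\acute{e}ch}\,D$ is the set of $i\in[n]$ such that the rows $i,\dots,n$ of $D$ have larger rank than rows $i+1,\dots,n$ (the pivot rows of a column echelon form of $D$). $\Omega^I_n=\{\begin{pmatrix}\tau_1\\\tau_2\end{pmatrix}\in\Omega^\circ_n:\mathrm{\acute{e}ch}\,\tau_2=I\}$. $\mathbb Z_2^n$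 acts on the left by $\mathrm{diag}(\varepsilon,\varepsilon)$ and $\mathbb Z_2^n\rtimes\mathfrak S_n$ (signed permutation matrices) by right multiplication; $\Omega^I_n$ is stable. For $I=\{i_1<\dots<i_m\}$, $[n]\setminus I=\{i'_1<\dots<i'_{n-m}\}$, $\sigma_I\in\mathfrak S_n$ sends $k\mapsto i_k$ ($k\le m$), $m+k\mapsto i'_k$, viewed as the permutation matrix with $\sigma e_i=e_{\sigma(i)}$, and $h(\sigma_I)=\mathrm{diag}(\sigma_I,\sigma_I)$. *)

theory Defs
  imports "Jordan_Normal_Form.DL_Rank" "HOL-Combinatorics.Permutations"
begin

text \<open>Integer matrices are Jordan_Normal_Form matrices of type int mat.
  Indices are 0-based: [n] is rendered as {..<n}.\<close>

definition int_rank :: "int mat \<Rightarrow> nat" where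
  "int_rank A = vec_space.rank (dim_row A) (map_mat rat_of_int A :: rat mat)"

definition SPP :: "nat \<Rightarrow> int mat set" where
  "SPP k = {A \<in> carrier_mat k k.
     (\<forall>i<k. \<forall>j<k. A $$ (i,j) \<in> {-1,0,1}) \<and>
     (\<forall>i<k. \<forall>j<k. \<forall>j'<k. A $$ (i,j) \<noteq> 0 \<longrightarrow> A $$ (i,j') \<noteq> 0 \<longrightarrow> j = j') \<and>
     (\<forall>j<k. \<forall>i<k. \<forall>i'<k. A $$ (i,j) \<noteq> 0 \<longrightarrow> A $$ (i',j) \<noteq> 0 \<longrightarrow> i = i')}"

definition SPI :: "nat \<Rightarrow> int mat set" where
  "SPI m = {A \<in> SPP m. transpose_mat A = A}"

text \<open>Z_2^m realised as diagonal sign matrices diag(eps_1,...,eps_m).\<close>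
definition sign_diags :: "nat \<Rightarrow> int mat set" where
  "sign_diags m = {E \<in> carrier_mat m m.
     (\<forall>i<m. \<forall>j<m. i \<noteq> j \<longrightarrow> E $$ (i,j) = 0) \<and> (\<forall>i<m. E $$ (i,i) \<in> {1,-1})}"

definition perm_mat :: "nat \<Rightarrow> (nat \<Rightarrow> nat) \<Rightarrow> int mat" where
  "perm_mat n \<sigma> = mat n n (\<lambda>(i,j). if i = \<sigma> j then 1 else 0)"

text \<open>Z_2^n semidirect S_n as signed permutation matrices.\<close>
definition signed_perms :: "nat \<Rightarrow> int mat set" where
  "signed_perms n = {E * perm_mat n \<sigma> | E \<sigma>. E \<in> sign_diags n \<and> \<sigma> permutes {..<n}}"

definition rows_from :: "nat \<Rightarrow> int mat \<Rightarrow> int mat" where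
  "rows_from i D = mat_of_rows (dim_col D) (drop i (rows D))"

definition ech :: "int mat \<Rightarrow> nat set" where
  "ech D = {i. i < dim_row D \<and> int_rank (rows_from (Suc i) D) < int_rank (rows_from i D)}"

definition Omega0 :: "nat \<Rightarrow> int mat set" where
  "Omega0 n = {\<tau>1 @\<^sub>r \<tau>2 | \<tau>1 \<tau>2. \<tau>1 \<in> SPP n \<and> \<tau>2 \<in> SPP n \<and>
     transpose_mat (transpose_mat \<tau>1 * \<tau>2) = transpose_mat \<tau>1 * \<tau>2 \<and>
     int_rank (\<tau>1 @\<^sub>r \<tau>2) = n}"

definition OmegaI :: "nat \<Rightarrow> nat set \<Rightarrow> int mat set" where
  "OmegaI n I = {\<tau>1 @\<^sub>r \<tau>2 | \<tau>1 \<tau>2. \<tau>1 @\<^sub>r \<tau>2 \<in> Omega0 n \<and>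
     \<tau>1 \<in> carrier_mat n n \<and> \<tau>2 \<in> carrier_mat n n \<and> ech \<tau>2 = I}"

definition dblock :: "nat \<Rightarrow> int mat \<Rightarrow> int mat" where
  "dblock n X = four_block_mat X (0\<^sub>m n n) (0\<^sub>m n n) X"

definition SPI_rel :: "nat \<Rightarrow> (int mat \<times> int mat) set" where
  "SPI_rel m = {(\<tau>, \<tau>'). \<tau> \<in> SPI m \<and> \<tau>' \<in> SPI m \<and>
     (\<exists>E \<in> sign_diags m. \<tau>' = E * \<tau> * E)}"

definition Omega_rel :: "nat \<Rightarrow> nat set \<Rightarrow> (int mat \<times> int mat) set" where
  "Omega_rel n I = {(\<omega>, \<omega>'). \<omega> \<in> OmegaI n I \<and> \<omega>' \<in> OmegaI n I \<and>
     (\<exists>E \<in> sign_diags n. \<exists>G \<in> signed_perms n. \<omega>' = dblock n E * \<omega> * G)}"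

definition sigmaI :: "nat \<Rightarrow> nat set \<Rightarrow> nat \<Rightarrow> nat" where
  "sigmaI n I = (\<lambda>k. if k < n
      then (sorted_list_of_set I @ sorted_list_of_set ({..<n} - I)) ! k else k)"

definition PhiI :: "nat \<Rightarrow> nat set \<Rightarrow> int mat \<Rightarrow> int mat" where
  "PhiI n I \<tau> = (let m = card I in
     dblock n (perm_mat n (sigmaI n I)) *
     (four_block_mat \<tau> (0\<^sub>m m (n-m)) (0\<^sub>m (n-m) m) (1\<^sub>m (n-m)) @\<^sub>r
      four_block_mat (1\<^sub>m m) (0\<^sub>m m (n-m)) (0\<^sub>m (n-m) m) (0\<^sub>m (n-m) (n-m))))"

end

theory Submission
  imports Defs
begin

text \<open>
  Write
  \<open>\<Phi>(\<tau>) = h(\<sigma>\<^sub>I) (\<tau> 0; 0 1; 1 0; 0 0)\<close> and \<open>m = #I\<close>. A sign change \<open>\<epsilon>\<tau>\<epsilon>\<close> of \<open>\<tau>\<close>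
  is realised by sign changes of the rows and of the columns of \<open>\<Phi>(\<tau>)\<close>. Conversely, if
  \<open>diag(E,E) \<Phi>(\<tau>) G = \<Phi>(\<tau>')\<close> for a signed permutation matrix \<open>G = P\<^sub>p S\<^sub>s\<close>, comparing the lower
  halves (a partial permutation matrix with nonzero rows \<open>I\<close>) shows that \<open>p\<close> fixes the first \<open>m\<close>
  columns with the signs of \<open>E\<close> and \<open>S\<^sub>s\<close> matching there, and then comparing the upper halves
  gives \<open>\<tau>' = S\<^sub>s \<tau> S\<^sub>s\<close>.

  For surjectivity, let \<open>(\<tau>\<^sub>1; \<tau>\<^sub>2) \<in> \<Omega>\<^sup>I\<^sub>n\<close>. Row \<open>\<sigma>\<^sub>I k\<close> of \<open>\<tau>\<^sub>2\<close> (\<open>k < m\<close>) has a single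
  nonzero entry, in column \<open>\<pi> k\<close>; these columns form a set \<open>J\<close> of size \<open>m\<close>. Symmetry of
  \<open>\<tau>\<^sub>1\<^sup>t \<tau>\<^sub>2\<close> forces the rows of \<open>\<tau>\<^sub>1\<close> indexed by \<open>I\<close> to vanish outside \<open>J\<close>, and the rank
  condition forces every column outside \<open>J\<close> to meet \<open>\<tau>\<^sub>1\<close>; counting shows that these columns
  correspond bijectively to the rows of \<open>\<tau>\<^sub>1\<close> outside \<open>I\<close>, which extends \<open>\<pi>\<close> to a
  permutation. Multiplying \<open>(\<tau>\<^sub>1; \<tau>\<^sub>2)\<close> on the right by the signed permutation matrix that
  reads off these nonzero entries turns it into \<open>\<Phi>(\<tau>)\<close> with \<open>\<tau>\<close> symmetric.
\<close>

section \<open>Rank of integer matrices\<close>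

lemma sum_eq_single:
  assumes "finite A" "a \<in> A" "\<And>x. x \<in> A \<Longrightarrow> x \<noteq> a \<Longrightarrow> g x = 0"
  shows "sum g A = (g a :: 'b :: comm_monoid_add)"
  using sum.remove[OF assms(1,2), of g] sum.neutral[of "A - {a}" g] assms(3) by auto

definition nonzero_cols :: "'a :: zero mat \<Rightarrow> nat set" where
  "nonzero_cols A = {j. j < dim_col A \<and> (\<exists>i<dim_row A. A $$ (i,j) \<noteq> 0)}"

lemma finite_nonzero_cols [simp]: "finite (nonzero_cols A)"
  unfolding nonzero_cols_def by simp

lemma nonzero_cols_map_mat_of_int [simp]:
  "nonzero_cols (map_mat (of_int :: int \<Rightarrow> 'a :: ring_char_0) A) = nonzero_cols A"
  unfolding nonzero_cols_def by auto

lemma ex_less_add_iff: "(\<exists>r<a + b. P r) \<longleftrightarrow> (\<exists>r<a. P r) \<or> (\<exists>r<b. P (a + r :: nat))"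
  by (metis add_diff_inverse_nat add_less_cancel_left trans_less_add1)

lemma nonzero_cols_append_rows:
  assumes "X \<in> carrier_mat n1 k" "Y \<in> carrier_mat n2 k"
  shows "nonzero_cols (X @\<^sub>r Y) =
    {j. j < k \<and> ((\<exists>r<n1. X $$ (r,j) \<noteq> 0) \<or> (\<exists>r<n2. Y $$ (r,j) \<noteq> 0))}"
proof -
  have dims: "dim_row (X @\<^sub>r Y) = n1 + n2" "dim_col (X @\<^sub>r Y) = k"
    using carrier_append_rows[OF assms] by auto
  have "(X @\<^sub>r Y) $$ (r,j) = X $$ (r,j)" if "r < n1" "j < k" for r j
    using that assms by (simp add: append_rows_def)
  moreover have "(X @\<^sub>r Y) $$ (n1 + r, j) = Y $$ (r,j)" if "r < n2" "j < k" for r j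
    using that assms by (simp add: append_rows_def)
  ultimately show ?thesis
    unfolding nonzero_cols_def dims ex_less_add_iff by (intro Collect_cong) auto
qed

lemma (in vec_space) nonzero_col_vector:
  assumes A: "A \<in> carrier_mat n nc" and v: "v \<in> set (cols A)" "v \<noteq> 0\<^sub>v n"
  shows "v \<in> col A ` nonzero_cols A"
proof -
  obtain j where j: "j < nc" "v = col A j"
    using v(1) A by (auto simp: cols_def)
  have "\<exists>i<n. A $$ (i,j) \<noteq> 0"
  proof (rule ccontr)
    assume "\<not> (\<exists>i<n. A $$ (i,j) \<noteq> 0)"
    then have "v = 0\<^sub>v n"
      using j A by (intro eq_vecI) auto
    then show False
      using v(2) by simp
  qed
  then show ?thesis
    using j A by (auto simp: nonzero_cols_def)
qed

lemma (in vec_space) rank_le_card_nonzero_cols: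
  assumes A: "A \<in> carrier_mat n nc"
  shows "rank A \<le> card (nonzero_cols A)"
proof -
  obtain S where S: "maximal S (\<lambda>T. T \<subseteq> set (cols A) \<and> lin_indpt T)"
    using maximal_exists[of "\<lambda>T. T \<subseteq> set (cols A) \<and> lin_indpt T" "card (set (cols A))" "{}"]
    by (meson List.finite_set card_mono empty_iff empty_subsetI finite_lin_indpt2 rev_finite_subset)
  have S_cols: "S \<subseteq> set (cols A)" and indpt: "lin_indpt S"
    using S unfolding maximal_def by auto
  have "S \<subseteq> carrier_vec n"
    using S_cols cols_dim A by blast
  moreover have "(UNIV :: 'a set) \<noteq> {0}"
    using one_neq_zero[where 'a = 'a] by blast
  ultimately have "0\<^sub>v n \<notin> S"
    using zero_nin_lin_indpt[OF _ indpt] by blast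
  then have "S \<subseteq> col A ` nonzero_cols A"
    using S_cols nonzero_col_vector[OF A] by blast
  then have "card S \<le> card (nonzero_cols A)"
    using card_image_le[of "nonzero_cols A" "col A"] card_mono[of "col A ` nonzero_cols A" S]
    by simp
  then show ?thesis
    using rank_card_indpt[OF A S] by simp
qed

lemma (in vec_space) lin_indpt_cols_with_sole_rows:
  assumes A: "A \<in> carrier_mat n nc" and S: "S \<subseteq> {..<nc}"
    and r: "\<And>j. j \<in> S \<Longrightarrow> r j < n \<and> A $$ (r j, j) \<noteq> 0"
    and sole: "\<And>j j'. j \<in> S \<Longrightarrow> j' \<in> S \<Longrightarrow> j' \<noteq> j \<Longrightarrow> A $$ (r j, j') = 0"
  shows "lin_indpt (col A ` S)"
proof
  assume "lin_dep (col A ` S)"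
  then obtain B a v where B: "finite B" "B \<subseteq> col A ` S" "lincomb a B = 0\<^sub>v n" "v \<in> B" "a v \<noteq> 0"
    unfolding lin_dep_def by auto
  obtain j where j: "j \<in> S" "v = col A j"
    using B by auto
  have "col A ` S \<subseteq> set (cols A)"
    using S A by (auto simp: cols_def)
  then have B_carrier: "B \<subseteq> carrier_vec n"
    using B(2) cols_dim[of A] A by blast
  have "0 = lincomb a B $ r j"
    using B(3) r[OF j(1)] by simp
  also have "\<dots> = (\<Sum>x\<in>B. a x * x $ r j)"
    using lincomb_index[of "r j" B a] r[OF j(1)] B_carrier by simp
  also have "\<dots> = a v * v $ r j"
  proof (rule sum_eq_single[OF B(1,4)])
    fix x assume "x \<in> B" "x \<noteq> v"
    then obtain j' where "j' \<in> S" "x = col A j'" "j' \<noteq> j"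
      using B(2) j by auto
    then show "a x * x $ r j = 0"
      using sole[OF j(1)] r[OF j(1)] S A by auto
  qed
  finally show False
    using B(5) j r[OF j(1)] S A by auto
qed

lemma (in vec_space) card_le_rank_if_sole_rows:
  assumes A: "A \<in> carrier_mat n nc" and S: "S \<subseteq> {..<nc}"
    and r: "\<And>j. j \<in> S \<Longrightarrow> r j < n \<and> A $$ (r j, j) \<noteq> 0"
    and sole: "\<And>j j'. j \<in> S \<Longrightarrow> j' \<in> S \<Longrightarrow> j' \<noteq> j \<Longrightarrow> A $$ (r j, j') = 0"
  shows "card S \<le> rank A"
proof -
  have "inj_on (col A) S"
  proof
    fix j j' assume jj': "j \<in> S" "j' \<in> S" "col A j = col A j'"
    have "A $$ (r j, j) = col A j $ r j" "A $$ (r j, j') = col A j' $ r j"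
      using r[OF jj'(1)] jj'(1,2) S A by auto
    then show "j = j'"
      using r[OF jj'(1)] sole[OF jj'(1,2)] jj'(3) by auto
  qed
  moreover have "card (col A ` S) \<le> rank A"
    using lin_indpt_cols_with_sole_rows[OF assms]
    by (intro rank_ge_card_indpt[OF A]) (use S A in \<open>auto simp: cols_def\<close>)
  ultimately show ?thesis
    by (simp add: card_image)
qed

lemma int_rank_le_card_nonzero_cols:
  assumes "A \<in> carrier_mat nr nc"
  shows "int_rank A \<le> card (nonzero_cols A)"
  using vec_space.rank_le_card_nonzero_cols[of "map_mat rat_of_int A" nr nc] assms
  unfolding int_rank_def by simp

lemma int_rank_eq_card_nonzero_cols:
  assumes A: "A \<in> carrier_mat nr nc"
    and row_unique: "\<And>i j j'. i < nr \<Longrightarrow> j < nc \<Longrightarrow> j' < nc \<Longrightarrow>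
      A $$ (i,j) \<noteq> 0 \<Longrightarrow> A $$ (i,j') \<noteq> 0 \<Longrightarrow> j = j'"
  shows "int_rank A = card (nonzero_cols A)"
proof (rule antisym)
  show "int_rank A \<le> card (nonzero_cols A)"
    by (rule int_rank_le_card_nonzero_cols[OF A])
  define r where "r j = (SOME i. i < nr \<and> A $$ (i,j) \<noteq> 0)" for j
  have r: "r j < nr \<and> A $$ (r j, j) \<noteq> 0" if "j \<in> nonzero_cols A" for j
  proof -
    have "\<exists>i. i < nr \<and> A $$ (i,j) \<noteq> 0"
      using that A by (auto simp: nonzero_cols_def)
    then show ?thesis
      unfolding r_def by (rule someI_ex)
  qed
  have "card (nonzero_cols A) \<le> vec_space.rank nr (map_mat rat_of_int A)"
  proof (rule vec_space.card_le_rank_if_sole_rows[of _ _ nc _ r])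
    fix j j' assume jj': "j \<in> nonzero_cols A" "j' \<in> nonzero_cols A" "j' \<noteq> j"
    have "r j < nr" "A $$ (r j, j) \<noteq> 0"
      using r[OF jj'(1)] by auto
    moreover have "A $$ (r j, j') = 0"
      using calculation row_unique[of "r j" j j'] jj' A by (auto simp: nonzero_cols_def)
    ultimately show "map_mat rat_of_int A $$ (r j, j') = 0"
      using jj'(2) A by (auto simp: nonzero_cols_def)
  qed (use A r in \<open>auto simp: nonzero_cols_def\<close>)
  then show "card (nonzero_cols A) \<le> int_rank A"
    unfolding int_rank_def using A by simp
qed

section \<open>Monomial matrices\<close>

definition monomial_mat :: "nat \<Rightarrow> (nat \<Rightarrow> nat) \<Rightarrow> (nat \<Rightarrow> 'a :: zero) \<Rightarrow> 'a mat" where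
  "monomial_mat n p s = mat n n (\<lambda>(i,j). if i = p j then s j else 0)"

abbreviation diagonal_mat :: "nat \<Rightarrow> (nat \<Rightarrow> 'a :: zero) \<Rightarrow> 'a mat" where
  "diagonal_mat n d \<equiv> monomial_mat n id d"

lemma permutes_lessThan_less:
  assumes "p permutes {..<n}" "j < n"
  shows "p j < n" and "inv_into UNIV p j < n"
  using permutes_in_image[OF assms(1), of j] permutes_in_image[OF permutes_inv[OF assms(1)], of j]
    assms(2)
  by simp_all

lemma monomial_mat_carrier [simp]: "monomial_mat n p s \<in> carrier_mat n n"
  and dim_monomial_mat [simp]: "dim_row (monomial_mat n p s) = n" "dim_col (monomial_mat n p s) = n"
  by (simp_all add: monomial_mat_def)

lemma index_monomial_mat [simp]:
  "i < n \<Longrightarrow> j < n \<Longrightarrow> monomial_mat n p s $$ (i,j) = (if i = p j then s j else 0)"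
  by (simp add: monomial_mat_def)

lemma monomial_mat_cong:
  "(\<And>j. j < n \<Longrightarrow> p j = q j) \<Longrightarrow> (\<And>j. j < n \<Longrightarrow> s j = t j) \<Longrightarrow>
    monomial_mat n p s = monomial_mat n q t"
  by (rule eq_matI) auto

lemma monomial_mat_id_one: "monomial_mat n id (\<lambda>_. 1) = 1\<^sub>m n"
  by (rule eq_matI) auto

lemma perm_mat_eq_monomial_mat: "perm_mat n p = monomial_mat n p (\<lambda>_. 1)"
  unfolding perm_mat_def monomial_mat_def by (rule eq_matI) auto

lemma perm_mat_carrier [simp]: "perm_mat n p \<in> carrier_mat n n"
  by (simp add: perm_mat_eq_monomial_mat)

lemma mult_monomial_mat_index:
  fixes X :: "'a :: semiring_0 mat"
  assumes X: "X \<in> carrier_mat k n" and ij: "i < k" "j < n" "p j < n"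
  shows "(X * monomial_mat n p s) $$ (i,j) = X $$ (i, p j) * s j"
proof -
  have "(X * monomial_mat n p s) $$ (i,j) = (\<Sum>l\<in>{0..<n}. X $$ (i,l) * (if l = p j then s j else 0))"
    using X ij by (simp add: scalar_prod_def)
  also have "\<dots> = X $$ (i, p j) * s j"
    by (subst sum_eq_single[of _ "p j"]) (use ij in auto)
  finally show ?thesis .
qed

lemma monomial_mat_mult_index:
  fixes X :: "'a :: semiring_0 mat"
  assumes X: "X \<in> carrier_mat n k" and p: "inj_on p {..<n}" and ij: "i < n" "p i < n" "j < k"
  shows "(monomial_mat n p s * X) $$ (p i, j) = s i * X $$ (i,j)"
proof -
  have "(monomial_mat n p s * X) $$ (p i, j) = (\<Sum>l\<in>{0..<n}. (if p i = p l then s l else 0) * X $$ (l,j))"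
    using X ij by (simp add: scalar_prod_def)
  also have "\<dots> = s i * X $$ (i,j)"
    by (subst sum_eq_single[of _ i]) (use ij p in \<open>auto dest: inj_onD\<close>)
  finally show ?thesis .
qed

lemma diagonal_mat_mult_index:
  fixes X :: "'a :: semiring_0 mat"
  assumes "X \<in> carrier_mat n k" "i < n" "j < k"
  shows "(diagonal_mat n d * X) $$ (i,j) = d i * X $$ (i,j)"
  using monomial_mat_mult_index[of X n k id i j d] assms by simp

lemma perm_mat_mult_index:
  assumes p: "p permutes {..<n}" and X: "X \<in> carrier_mat n k" and ij: "i < n" "j < k"
  shows "(perm_mat n p * X) $$ (p i, j) = X $$ (i,j)"
  using monomial_mat_mult_index[OF X permutes_inj_on[OF p] ij(1) permutes_lessThan_less(1)[OF p ij(1)] ij(2)]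
  unfolding perm_mat_eq_monomial_mat by simp

lemma sign_action_index:
  fixes X :: "'a :: semiring_0 mat"
  assumes X: "X \<in> carrier_mat n n" and p: "p permutes {..<n}" and ij: "i < n" "j < n"
  shows "(diagonal_mat n e * X * monomial_mat n p s) $$ (i,j) = e i * X $$ (i, p j) * s j"
proof -
  have DX: "diagonal_mat n e * X \<in> carrier_mat n n"
    using mult_carrier_mat[OF monomial_mat_carrier X] .
  have pj: "p j < n"
    using permutes_lessThan_less(1)[OF p ij(2)] .
  show ?thesis
    unfolding mult_monomial_mat_index[where p = p and s = s, OF DX ij pj]
      diagonal_mat_mult_index[OF X ij(1) pj] ..
qed

lemma monomial_mat_mult:
  fixes s t :: "nat \<Rightarrow> 'a :: semiring_0"
  assumes q: "q permutes {..<n}"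
  shows "monomial_mat n p s * monomial_mat n q t = monomial_mat n (p \<circ> q) (\<lambda>j. s (q j) * t j)"
proof (rule eq_matI)
  fix i j assume "i < dim_row (monomial_mat n (p \<circ> q) (\<lambda>j. s (q j) * t j))"
    "j < dim_col (monomial_mat n (p \<circ> q) (\<lambda>j. s (q j) * t j))"
  then have "i < n" "j < n" "q j < n"
    using permutes_lessThan_less(1)[OF q] by auto
  then show "(monomial_mat n p s * monomial_mat n q t) $$ (i,j) =
      monomial_mat n (p \<circ> q) (\<lambda>j. s (q j) * t j) $$ (i,j)"
    by (subst mult_monomial_mat_index[of _ n n]) auto
qed auto

lemma diagonal_mat_mult:
  fixes d d' :: "nat \<Rightarrow> 'a :: semiring_0"
  shows "diagonal_mat n d * diagonal_mat n d' = diagonal_mat n (\<lambda>i. d i * d' i)"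
  using monomial_mat_mult[OF permutes_id, of n id d d'] by simp

lemma transpose_perm_mat_mult_perm_mat:
  assumes p: "p permutes {..<n}"
  shows "transpose_mat (perm_mat n p) * perm_mat n p = 1\<^sub>m n"
proof -
  have inv_iff: "i = inv_into UNIV p j \<longleftrightarrow> j = p i" for i j
    using permutes_inv_eq[OF p, of j i] by auto
  have "transpose_mat (perm_mat n p) = monomial_mat n (inv_into UNIV p) (\<lambda>_. 1)"
    unfolding perm_mat_eq_monomial_mat by (rule eq_matI) (auto simp: inv_iff)
  then show ?thesis
    by (simp add: perm_mat_eq_monomial_mat monomial_mat_mult[OF p] permutes_inv_o(2)[OF p]
        monomial_mat_id_one)
qed

lemma transpose_perm_mat_mult_cancel:
  assumes p: "p permutes {..<n}" and X: "X \<in> carrier_mat n k" and Y: "Y \<in> carrier_mat n l"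
  shows "transpose_mat (perm_mat n p * X) * (perm_mat n p * Y) = transpose_mat X * Y"
proof -
  have P: "perm_mat n p \<in> carrier_mat n n" and PT: "transpose_mat (perm_mat n p) \<in> carrier_mat n n"
    by simp_all
  have XT: "transpose_mat X \<in> carrier_mat k n"
    using X by simp
  have "transpose_mat (perm_mat n p * X) * (perm_mat n p * Y)
      = transpose_mat X * transpose_mat (perm_mat n p) * (perm_mat n p * Y)"
    by (simp add: transpose_mult[OF P X])
  also have "\<dots> = transpose_mat X * (transpose_mat (perm_mat n p) * (perm_mat n p * Y))"
    using Y by (intro assoc_mult_mat[OF XT PT] mult_carrier_mat[OF P])
  also have "transpose_mat (perm_mat n p) * (perm_mat n p * Y) = Y"
    using Y by (simp add: assoc_mult_mat[OF PT P Y, symmetric] transpose_perm_mat_mult_perm_mat[OF p])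
  finally show ?thesis .
qed

lemma transpose_mult_index:
  assumes "A \<in> carrier_mat n k" "B \<in> carrier_mat n l" "a < k" "b < l"
  shows "(transpose_mat A * B) $$ (a,b) = (\<Sum>r<n. A $$ (r,a) * B $$ (r,b))"
  using assms by (simp add: scalar_prod_def atLeast0LessThan)

lemma eq_mat_on_permuted_rowsI:
  assumes "M \<in> carrier_mat n k" "N \<in> carrier_mat n k" and p: "p permutes {..<n}"
    and "\<And>i j. i < n \<Longrightarrow> j < k \<Longrightarrow> M $$ (p i, j) = N $$ (p i, j)"
  shows "M = N"
proof (rule eq_matI)
  fix r j assume "r < dim_row N" "j < dim_col N"
  then have "r < n" "j < k"
    using assms(2) by auto
  then show "M $$ (r,j) = N $$ (r,j)"
    using assms(4)[OF permutes_lessThan_less(2)[OF p] \<open>j < k\<close>] permutes_inverses(1)[OF p] by metis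
qed (use assms in auto)

section \<open>Sign matrices and signed permutation matrices\<close>

lemma sign_mult: "(a :: int) \<in> {1,-1} \<Longrightarrow> b \<in> {1,-1} \<Longrightarrow> a * b \<in> {1,-1}"
  and sign_square: "(a :: int) \<in> {1,-1} \<Longrightarrow> a * a = 1"
  by auto

lemma diagonal_mat_in_sign_diags:
  "\<forall>i<m. e i \<in> {1,-1} \<Longrightarrow> diagonal_mat m e \<in> sign_diags m"
  unfolding sign_diags_def by auto

lemma sign_diagsE:
  assumes "E \<in> sign_diags m"
  obtains e where "\<forall>i<m. e i \<in> {1,-1}" "E = diagonal_mat m e"
proof
  show "\<forall>i<m. E $$ (i,i) \<in> {1,-1}"
    using assms by (simp add: sign_diags_def)
  show "E = diagonal_mat m (\<lambda>i. E $$ (i,i))"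
    using assms unfolding sign_diags_def by (intro eq_matI) auto
qed

lemma sign_diags_carrier: "E \<in> sign_diags m \<Longrightarrow> E \<in> carrier_mat m m"
  unfolding sign_diags_def by simp

lemma sign_diags_one: "1\<^sub>m m \<in> sign_diags m"
  unfolding sign_diags_def by auto

lemma sign_diags_mult:
  assumes "E \<in> sign_diags m" "F \<in> sign_diags m"
  shows "E * F \<in> sign_diags m" and "E * F = F * E" and "E * E = 1\<^sub>m m"
proof -
  obtain e where e: "\<forall>i<m. e i \<in> {1,-1}" "E = diagonal_mat m e"
    using assms(1) by (rule sign_diagsE)
  obtain f where f: "\<forall>i<m. f i \<in> {1,-1}" "F = diagonal_mat m f"
    using assms(2) by (rule sign_diagsE)
  show "E * F \<in> sign_diags m"
    unfolding e(2) f(2) diagonal_mat_mult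
    using e(1) f(1) sign_mult by (intro diagonal_mat_in_sign_diags) blast
  show "E * F = F * E"
    unfolding e(2) f(2) diagonal_mat_mult by (simp add: mult.commute)
  have "E * E = diagonal_mat m (\<lambda>_. 1)"
    unfolding e(2) diagonal_mat_mult using e(1) sign_square by (intro monomial_mat_cong) auto
  then show "E * E = 1\<^sub>m m"
    by (simp add: monomial_mat_id_one)
qed

lemma monomial_mat_in_signed_perms:
  assumes p: "p permutes {..<n}" and s: "\<forall>j<n. s j \<in> {1,-1}"
  shows "monomial_mat n p s \<in> signed_perms n"
proof -
  have "diagonal_mat n (\<lambda>i. s (inv_into UNIV p i)) \<in> sign_diags n"
    using s permutes_lessThan_less(2)[OF p] by (intro diagonal_mat_in_sign_diags) simp
  then have "diagonal_mat n (\<lambda>i. s (inv_into UNIV p i)) * perm_mat n p \<in> signed_perms n"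
    unfolding signed_perms_def using p by blast
  moreover have "diagonal_mat n (\<lambda>i. s (inv_into UNIV p i)) * perm_mat n p = monomial_mat n p s"
    unfolding perm_mat_eq_monomial_mat monomial_mat_mult[OF p]
    by (simp add: permutes_inverses(2)[OF p])
  ultimately show ?thesis
    by simp
qed

lemma signed_permsE:
  assumes "G \<in> signed_perms n"
  obtains p s where "p permutes {..<n}" "\<forall>j<n. s j \<in> {1,-1}" "G = monomial_mat n p s"
proof -
  obtain E p where E: "E \<in> sign_diags n" and p: "p permutes {..<n}"
    and G: "G = E * perm_mat n p"
    using assms unfolding signed_perms_def by blast
  obtain e where e: "\<forall>i<n. e i \<in> {1,-1}" and "E = diagonal_mat n e"
    using E by (rule sign_diagsE)
  then have "G = monomial_mat n p (\<lambda>j. e (p j))"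
    unfolding G by (simp add: perm_mat_eq_monomial_mat monomial_mat_mult[OF p])
  moreover have "\<forall>j<n. e (p j) \<in> {1,-1}"
    using e permutes_lessThan_less(1)[OF p] by simp
  ultimately show ?thesis
    using that[OF p] by simp
qed

lemma signed_perms_carrier: "G \<in> signed_perms n \<Longrightarrow> G \<in> carrier_mat n n"
  by (auto elim: signed_permsE)

lemma signed_perms_one: "1\<^sub>m n \<in> signed_perms n"
  using monomial_mat_in_signed_perms[OF permutes_id, where s = "\<lambda>_. 1"]
  by (simp add: monomial_mat_id_one)

lemma signed_perms_mult:
  assumes "G \<in> signed_perms n" "H \<in> signed_perms n"
  shows "G * H \<in> signed_perms n"
proof -
  obtain p s where p: "p permutes {..<n}" "\<forall>j<n. s j \<in> {1,-1}" "G = monomial_mat n p s"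
    using assms(1) by (rule signed_permsE)
  obtain q t where q: "q permutes {..<n}" "\<forall>j<n. t j \<in> {1,-1}" "H = monomial_mat n q t"
    using assms(2) by (rule signed_permsE)
  have "\<forall>j<n. s (q j) * t j \<in> {1,-1}"
    using p(2) q(2) permutes_lessThan_less(1)[OF q(1)] sign_mult by blast
  then show ?thesis
    unfolding p(3) q(3) monomial_mat_mult[OF q(1)]
    by (intro monomial_mat_in_signed_perms permutes_compose[OF q(1) p(1)])
qed

lemma signed_perms_right_inverse:
  assumes "G \<in> signed_perms n"
  obtains H where "H \<in> signed_perms n" "G * H = 1\<^sub>m n"
proof -
  obtain p s where p: "p permutes {..<n}" and s: "\<forall>j<n. s j \<in> {1,-1}"
    and G: "G = monomial_mat n p s"
    using assms by (rule signed_permsE)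
  let ?H = "monomial_mat n (inv_into UNIV p) (\<lambda>j. s (inv_into UNIV p j))"
  have inv_p: "inv_into UNIV p permutes {..<n}"
    by (rule permutes_inv[OF p])
  have "?H \<in> signed_perms n"
    using s permutes_lessThan_less(2)[OF p] by (intro monomial_mat_in_signed_perms[OF inv_p]) simp
  moreover have "s (inv_into UNIV p j) * s (inv_into UNIV p j) = 1" if "j < n" for j
    using s permutes_lessThan_less(2)[OF p that] sign_square by blast
  then have "G * ?H = monomial_mat n id (\<lambda>_. 1)"
    unfolding G monomial_mat_mult[OF inv_p] permutes_inv_o(1)[OF p]
    by (intro monomial_mat_cong) auto
  ultimately show ?thesis
    using that unfolding monomial_mat_id_one by blast
qed

lemma dblock_carrier [simp]: "X \<in> carrier_mat n n \<Longrightarrow> dblock n X \<in> carrier_mat (n + n) (n + n)"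
  unfolding dblock_def by auto

lemma dblock_one: "dblock n (1\<^sub>m n) = 1\<^sub>m (n + n)"
  unfolding dblock_def by simp

lemma dblock_mult:
  assumes "X \<in> carrier_mat n n" "Y \<in> carrier_mat n n"
  shows "dblock n X * dblock n Y = dblock n (X * Y)"
  unfolding dblock_def using assms by (subst mult_four_block_mat) auto

lemma dblock_mult_append_rows:
  assumes P: "P \<in> carrier_mat n n" and X: "X \<in> carrier_mat n k" and Y: "Y \<in> carrier_mat n k"
  shows "dblock n P * (X @\<^sub>r Y) = (P * X) @\<^sub>r (P * Y)"
  unfolding dblock_def append_rows_def using P X Y by (subst mult_four_block_mat) auto

lemma append_rows_mult:
  assumes X: "X \<in> carrier_mat n1 k" and Y: "Y \<in> carrier_mat n2 k" and G: "G \<in> carrier_mat k l"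
  shows "(X @\<^sub>r Y) * G = (X * G) @\<^sub>r (Y * G)"
proof -
  have G_block: "four_block_mat G (0\<^sub>m k 0) (0\<^sub>m 0 l) (0\<^sub>m 0 0) = G"
    using G by (intro eq_matI) auto
  have "(X @\<^sub>r Y) * G = four_block_mat X (0\<^sub>m n1 0) Y (0\<^sub>m n2 0) *
      four_block_mat G (0\<^sub>m k 0) (0\<^sub>m 0 l) (0\<^sub>m 0 0)"
    unfolding append_rows_def G_block using X Y by simp
  also have "\<dots> = (X * G) @\<^sub>r (Y * G)"
    unfolding append_rows_def using X Y G by (subst mult_four_block_mat) auto
  finally show ?thesis .
qed

lemma append_rows_inject:
  assumes "X \<in> carrier_mat n1 k" "X' \<in> carrier_mat n1 k" "Y \<in> carrier_mat n2 k" "Y' \<in> carrier_mat n2 k"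
  shows "X @\<^sub>r Y = X' @\<^sub>r Y' \<longleftrightarrow> X = X' \<and> Y = Y'"
proof
  assume eq: "X @\<^sub>r Y = X' @\<^sub>r Y'"
  have "X $$ (i,j) = X' $$ (i,j)" if "i < n1" "j < k" for i j
    using arg_cong[OF eq, of "\<lambda>M. M $$ (i,j)"] that assms by (simp add: append_rows_def)
  moreover have "Y $$ (i,j) = Y' $$ (i,j)" if "i < n2" "j < k" for i j
    using arg_cong[OF eq, of "\<lambda>M. M $$ (n1 + i,j)"] that assms by (simp add: append_rows_def)
  ultimately show "X = X' \<and> Y = Y'"
    using assms by (intro conjI eq_matI) auto
qed simp

lemma dblock_action_append_rows:
  assumes "E \<in> carrier_mat n n" "X \<in> carrier_mat n n" "Y \<in> carrier_mat n n" "G \<in> carrier_mat n n"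
  shows "dblock n E * (X @\<^sub>r Y) * G = (E * X * G) @\<^sub>r (E * Y * G)"
proof -
  have "dblock n E * (X @\<^sub>r Y) * G = ((E * X) @\<^sub>r (E * Y)) * G"
    using assms by (simp add: dblock_mult_append_rows)
  also have "\<dots> = (E * X * G) @\<^sub>r (E * Y * G)"
    using assms by (intro append_rows_mult) auto
  finally show ?thesis .
qed

lemma dblock_action_compose:
  assumes E: "E \<in> carrier_mat n n" and F: "F \<in> carrier_mat n n"
    and G: "G \<in> carrier_mat n n" and H: "H \<in> carrier_mat n n"
    and \<omega>: "\<omega> \<in> carrier_mat (n + n) n"
  shows "dblock n F * (dblock n E * \<omega> * G) * H = dblock n (F * E) * \<omega> * (G * H)"
proof -
  have DE: "dblock n E \<in> carrier_mat (n + n) (n + n)" and DF: "dblock n F \<in> carrier_mat (n + n) (n + n)"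
    using E F by simp_all
  have DE\<omega>: "dblock n E * \<omega> \<in> carrier_mat (n + n) n"
    using DE \<omega> by simp
  then have DE\<omega>G: "dblock n E * \<omega> * G \<in> carrier_mat (n + n) n"
    using G by simp
  have "dblock n F * (dblock n E * \<omega> * G) * H = dblock n F * (dblock n E * \<omega> * G * H)"
    by (rule assoc_mult_mat[OF DF DE\<omega>G H])
  also have "dblock n E * \<omega> * G * H = dblock n E * \<omega> * (G * H)"
    by (rule assoc_mult_mat[OF DE\<omega> G H])
  also have "dblock n F * (dblock n E * \<omega> * (G * H)) = dblock n F * (dblock n E * \<omega>) * (G * H)"
    using G H by (intro assoc_mult_mat[OF DF DE\<omega>, symmetric] mult_carrier_mat)
  also have "dblock n F * (dblock n E * \<omega>) = dblock n (F * E) * \<omega>"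
    using assoc_mult_mat[OF DF DE \<omega>] dblock_mult[OF F E] by simp
  finally show ?thesis .
qed

section \<open>Orbit relations and their quotients\<close>

lemma equiv_orbit_relation:
  assumes identity: "\<And>x. x \<in> A \<Longrightarrow> \<exists>g\<in>G. act g x = x"
    and inverse: "\<And>g x. g \<in> G \<Longrightarrow> x \<in> A \<Longrightarrow> \<exists>h\<in>G. act h (act g x) = x"
    and compose: "\<And>g h x. g \<in> G \<Longrightarrow> h \<in> G \<Longrightarrow> x \<in> A \<Longrightarrow> \<exists>k\<in>G. act k x = act h (act g x)"
  shows "equiv A {(x, y). x \<in> A \<and> y \<in> A \<and> (\<exists>g\<in>G. y = act g x)}"
proof (rule equivI)
  show "{(x, y). x \<in> A \<and> y \<in> A \<and> (\<exists>g\<in>G. y = act g x)} \<subseteq> A \<times> A"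
    by auto
  show "refl_on A {(x, y). x \<in> A \<and> y \<in> A \<and> (\<exists>g\<in>G. y = act g x)}"
    using identity by (auto simp: refl_on_def) metis
  show "sym {(x, y). x \<in> A \<and> y \<in> A \<and> (\<exists>g\<in>G. y = act g x)}"
    using inverse by (auto simp: sym_def) metis
  show "trans {(x, y). x \<in> A \<and> y \<in> A \<and> (\<exists>g\<in>G. y = act g x)}"
    using compose by (auto simp: trans_def) metis
qed

lemma Image_image_equiv_class:
  assumes S: "equiv B S" and respects: "\<And>a a'. (a, a') \<in> R \<Longrightarrow> (f a, f a') \<in> S"
    and a: "a \<in> R `` {a}"
  shows "S `` (f ` (R `` {a})) = S `` {f a}"
proof
  show "S `` (f ` (R `` {a})) \<subseteq> S `` {f a}"
    using respects S unfolding equiv_def trans_def by blast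
  show "S `` {f a} \<subseteq> S `` (f ` (R `` {a}))"
    using a by blast
qed

lemma bij_betw_quotient_map:
  assumes R: "equiv A R" and S: "equiv B S"
    and maps: "\<And>a. a \<in> A \<Longrightarrow> f a \<in> B"
    and respects: "\<And>a a'. (a, a') \<in> R \<Longrightarrow> (f a, f a') \<in> S"
    and reflects: "\<And>a a'. a \<in> A \<Longrightarrow> a' \<in> A \<Longrightarrow> (f a, f a') \<in> S \<Longrightarrow> (a, a') \<in> R"
    and surj: "\<And>b. b \<in> B \<Longrightarrow> \<exists>a\<in>A. (f a, b) \<in> S"
  shows "bij_betw (\<lambda>X. S `` (f ` X)) (A // R) (B // S)"
proof -
  have image_class: "S `` (f ` (R `` {a})) = S `` {f a}" if "a \<in> A" for a
    using Image_image_equiv_class[OF S respects equiv_class_self[OF R that]] .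
  have "inj_on (\<lambda>X. S `` (f ` X)) (A // R)"
  proof (rule inj_onI)
    fix X Y assume "X \<in> A // R" "Y \<in> A // R" and eq: "S `` (f ` X) = S `` (f ` Y)"
    then obtain a b where ab: "a \<in> A" "b \<in> A" "X = R `` {a}" "Y = R `` {b}"
      by (auto elim!: quotientE)
    then have "(f a, f b) \<in> S"
      using eq image_class eq_equiv_class_iff[OF S maps maps] by simp
    then show "X = Y"
      using ab reflects eq_equiv_class_iff[OF R] by simp
  qed
  moreover have "(\<lambda>X. S `` (f ` X)) ` (A // R) \<subseteq> B // S"
    using image_class maps quotientI[of _ B S] by (auto elim!: quotientE)
  moreover have "B // S \<subseteq> (\<lambda>X. S `` (f ` X)) ` (A // R)"
  proof
    fix Z assume "Z \<in> B // S"
    then obtain b where b: "b \<in> B" "Z = S `` {b}"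
      by (auto elim!: quotientE)
    then obtain a where a: "a \<in> A" "(f a, b) \<in> S"
      using surj by blast
    then have "Z = S `` (f ` (R `` {a}))"
      using b image_class eq_equiv_class_iff[OF S maps[OF a(1)] b(1)] by simp
    then show "Z \<in> (\<lambda>X. S `` (f ` X)) ` (A // R)"
      using quotientI[OF a(1)] by blast
  qed
  ultimately show ?thesis
    unfolding bij_betw_def by blast
qed

lemma SPI_carrier: "\<tau> \<in> SPI m \<Longrightarrow> \<tau> \<in> carrier_mat m m"
  unfolding SPI_def SPP_def by simp

lemma OmegaI_carrier: "\<omega> \<in> OmegaI n I \<Longrightarrow> \<omega> \<in> carrier_mat (n + n) n"
  unfolding OmegaI_def by auto

lemma equiv_SPI_rel: "equiv (SPI m) (SPI_rel m)"
  unfolding SPI_rel_def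
proof (rule equiv_orbit_relation[where act = "\<lambda>E \<tau>. E * \<tau> * E"])
  fix \<tau> assume "\<tau> \<in> SPI m"
  then have "\<tau> \<in> carrier_mat m m"
    by (rule SPI_carrier)
  then have "1\<^sub>m m * \<tau> * 1\<^sub>m m = \<tau>"
    by simp
  then show "\<exists>E\<in>sign_diags m. E * \<tau> * E = \<tau>"
    using sign_diags_one by blast
next
  fix E \<tau> assume E: "E \<in> sign_diags m" and \<tau>: "\<tau> \<in> SPI m"
  have "E * (E * \<tau> * E) * E = (E * E) * \<tau> * (E * E)"
    using sign_diags_carrier[OF E] SPI_carrier[OF \<tau>]
    by (simp add: assoc_mult_mat[of _ m m _ m _ m])
  also have "\<dots> = \<tau>"
    using sign_diags_mult(3)[OF E E] SPI_carrier[OF \<tau>] by simp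
  finally show "\<exists>F\<in>sign_diags m. F * (E * \<tau> * E) * F = \<tau>"
    using E by blast
next
  fix E F \<tau> assume E: "E \<in> sign_diags m" and F: "F \<in> sign_diags m" and \<tau>: "\<tau> \<in> SPI m"
  have "(F * E) * \<tau> * (E * F) = F * (E * \<tau> * E) * F"
    using sign_diags_carrier[OF E] sign_diags_carrier[OF F] SPI_carrier[OF \<tau>]
    by (simp add: assoc_mult_mat[of _ m m _ m _ m])
  then show "\<exists>K\<in>sign_diags m. K * \<tau> * K = F * (E * \<tau> * E) * F"
    using sign_diags_mult(1,2)[OF F E] by metis
qed

lemma Omega_relI:
  assumes "\<omega> \<in> OmegaI n I" "\<omega>' \<in> OmegaI n I" "E \<in> sign_diags n" "G \<in> signed_perms n"
    and "\<omega>' = dblock n E * \<omega> * G"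
  shows "(\<omega>, \<omega>') \<in> Omega_rel n I"
  unfolding Omega_rel_def using assms by blast

lemma Omega_rel_orbit:
  "Omega_rel n I = {(\<omega>, \<omega>'). \<omega> \<in> OmegaI n I \<and> \<omega>' \<in> OmegaI n I \<and>
     (\<exists>g\<in>sign_diags n \<times> signed_perms n. \<omega>' = dblock n (fst g) * \<omega> * snd g)}"
  unfolding Omega_rel_def by auto

lemma equiv_Omega_rel: "equiv (OmegaI n I) (Omega_rel n I)"
  unfolding Omega_rel_orbit
proof (rule equiv_orbit_relation[where act = "\<lambda>g \<omega>. dblock n (fst g) * \<omega> * snd g"])
  fix \<omega> assume "\<omega> \<in> OmegaI n I"
  then have "\<omega> \<in> carrier_mat (n + n) n"
    by (rule OmegaI_carrier)
  then have "dblock n (1\<^sub>m n) * \<omega> * 1\<^sub>m n = \<omega>"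
    by (simp add: dblock_one)
  then show "\<exists>g\<in>sign_diags n \<times> signed_perms n. dblock n (fst g) * \<omega> * snd g = \<omega>"
    using sign_diags_one signed_perms_one by fastforce
next
  fix g \<omega> assume "g \<in> sign_diags n \<times> signed_perms n" and \<omega>: "\<omega> \<in> OmegaI n I"
  then obtain E G where EG: "g = (E, G)" "E \<in> sign_diags n" "G \<in> signed_perms n"
    by auto
  obtain H where H: "H \<in> signed_perms n" "G * H = 1\<^sub>m n"
    using EG(3) by (rule signed_perms_right_inverse)
  have "dblock n E * (dblock n E * \<omega> * G) * H = dblock n (E * E) * \<omega> * (G * H)"
    using sign_diags_carrier[OF EG(2)] signed_perms_carrier[OF EG(3)] signed_perms_carrier[OF H(1)]
      OmegaI_carrier[OF \<omega>] by (intro dblock_action_compose)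
  also have "\<dots> = \<omega>"
    using OmegaI_carrier[OF \<omega>] by (simp add: sign_diags_mult(3)[OF EG(2,2)] H(2) dblock_one)
  finally show "\<exists>h\<in>sign_diags n \<times> signed_perms n.
      dblock n (fst h) * (dblock n (fst g) * \<omega> * snd g) * snd h = \<omega>"
    using EG H(1) by (intro bexI[of _ "(E, H)"]) auto
next
  fix g h \<omega> assume "g \<in> sign_diags n \<times> signed_perms n" "h \<in> sign_diags n \<times> signed_perms n"
    and \<omega>: "\<omega> \<in> OmegaI n I"
  then obtain E G F H where EG: "g = (E, G)" "E \<in> sign_diags n" "G \<in> signed_perms n"
    and FH: "h = (F, H)" "F \<in> sign_diags n" "H \<in> signed_perms n"
    by auto
  have "dblock n (F * E) * \<omega> * (G * H) = dblock n F * (dblock n E * \<omega> * G) * H"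
    using sign_diags_carrier[OF EG(2)] signed_perms_carrier[OF EG(3)] sign_diags_carrier[OF FH(2)]
      signed_perms_carrier[OF FH(3)] OmegaI_carrier[OF \<omega>] by (simp add: dblock_action_compose)
  moreover have "(F * E, G * H) \<in> sign_diags n \<times> signed_perms n"
    using sign_diags_mult(1)[OF FH(2) EG(2)] signed_perms_mult[OF EG(3) FH(3)] by simp
  ultimately show "\<exists>k\<in>sign_diags n \<times> signed_perms n.
      dblock n (fst k) * \<omega> * snd k = dblock n (fst h) * (dblock n (fst g) * \<omega> * snd g) * snd h"
    using EG FH by (intro bexI[of _ "(F * E, G * H)"]) auto
qed

section \<open>Signed partial permutation matrices\<close>

lemma SPPD:
  assumes "A \<in> SPP n"
  shows "A \<in> carrier_mat n n"
    and "\<And>i j. i < n \<Longrightarrow> j < n \<Longrightarrow> A $$ (i,j) \<in> {-1,0,1}"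
    and "\<And>i j j'. i < n \<Longrightarrow> j < n \<Longrightarrow> j' < n \<Longrightarrow>
      A $$ (i,j) \<noteq> 0 \<Longrightarrow> A $$ (i,j') \<noteq> 0 \<Longrightarrow> j = j'"
    and "\<And>i i' j. i < n \<Longrightarrow> i' < n \<Longrightarrow> j < n \<Longrightarrow>
      A $$ (i,j) \<noteq> 0 \<Longrightarrow> A $$ (i',j) \<noteq> 0 \<Longrightarrow> i = i'"
proof -
  have conds: "A \<in> carrier_mat n n \<and>
     (\<forall>i<n. \<forall>j<n. A $$ (i,j) \<in> {-1,0,1}) \<and>
     (\<forall>i<n. \<forall>j<n. \<forall>j'<n. A $$ (i,j) \<noteq> 0 \<longrightarrow> A $$ (i,j') \<noteq> 0 \<longrightarrow> j = j') \<and>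
     (\<forall>j<n. \<forall>i<n. \<forall>i'<n. A $$ (i,j) \<noteq> 0 \<longrightarrow> A $$ (i',j) \<noteq> 0 \<longrightarrow> i = i')"
    using assms unfolding SPP_def by (rule CollectD)
  then show "A \<in> carrier_mat n n"
    by (rule conjunct1)
  show "\<And>i j. i < n \<Longrightarrow> j < n \<Longrightarrow> A $$ (i,j) \<in> {-1,0,1}"
    using conds[THEN conjunct2, THEN conjunct1] by blast
  show "\<And>i j j'. i < n \<Longrightarrow> j < n \<Longrightarrow> j' < n \<Longrightarrow>
      A $$ (i,j) \<noteq> 0 \<Longrightarrow> A $$ (i,j') \<noteq> 0 \<Longrightarrow> j = j'"
    using conds[THEN conjunct2, THEN conjunct2, THEN conjunct1] by blast
  show "\<And>i i' j. i < n \<Longrightarrow> i' < n \<Longrightarrow> j < n \<Longrightarrow>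
      A $$ (i,j) \<noteq> 0 \<Longrightarrow> A $$ (i',j) \<noteq> 0 \<Longrightarrow> i = i'"
    using conds[THEN conjunct2, THEN conjunct2, THEN conjunct2] by blast
qed

lemmas SPP_carrier = SPPD(1) and SPP_entry = SPPD(2)
  and SPP_row_unique = SPPD(3) and SPP_col_unique = SPPD(4)

lemma SPPI:
  assumes "A \<in> carrier_mat n n"
    and "\<And>i j. i < n \<Longrightarrow> j < n \<Longrightarrow> A $$ (i,j) \<in> {-1,0,1}"
    and "\<And>i j j'. i < n \<Longrightarrow> j < n \<Longrightarrow> j' < n \<Longrightarrow> A $$ (i,j) \<noteq> 0 \<Longrightarrow> A $$ (i,j') \<noteq> 0 \<Longrightarrow> j = j'"
    and "\<And>i i' j. i < n \<Longrightarrow> i' < n \<Longrightarrow> j < n \<Longrightarrow> A $$ (i,j) \<noteq> 0 \<Longrightarrow> A $$ (i',j) \<noteq> 0 \<Longrightarrow> i = i'"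
  shows "A \<in> SPP n"
  unfolding SPP_def using assms by (intro CollectI conjI allI impI) blast+

lemma one_mat_SPP: "1\<^sub>m n \<in> SPP n"
  by (rule SPPI) (auto split: if_splits)

lemma zero_mat_SPP: "0\<^sub>m n n \<in> SPP n"
  by (rule SPPI) auto

lemma index_block_diag:
  assumes "A \<in> carrier_mat m m" "B \<in> carrier_mat k k" "i < m + k" "j < m + k"
  shows "four_block_mat A (0\<^sub>m m k) (0\<^sub>m k m) B $$ (i,j) =
    (if i < m \<and> j < m then A $$ (i,j) else if m \<le> i \<and> m \<le> j then B $$ (i - m, j - m) else 0)"
  using assms by simp

lemma block_diag_SPP:
  assumes A: "A \<in> SPP m" and B: "B \<in> SPP k"
  shows "four_block_mat A (0\<^sub>m m k) (0\<^sub>m k m) B \<in> SPP (m + k)"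
proof (rule SPPI)
  let ?M = "four_block_mat A (0\<^sub>m m k) (0\<^sub>m k m) B"
  note index = index_block_diag[OF SPP_carrier[OF A] SPP_carrier[OF B]]
  show "?M \<in> carrier_mat (m + k) (m + k)"
    using SPP_carrier[OF A] SPP_carrier[OF B] by simp
  show "?M $$ (i,j) \<in> {-1,0,1}" if "i < m + k" "j < m + k" for i j
    unfolding index[OF that] using that SPP_entry[OF A, of i j] SPP_entry[OF B, of "i - m" "j - m"] by auto
  show "j = j'" if ij: "i < m + k" "j < m + k" "j' < m + k" "?M $$ (i,j) \<noteq> 0" "?M $$ (i,j') \<noteq> 0"
    for i j j'
  proof (cases "i < m")
    case True
    then show ?thesis
      using ij index SPP_row_unique[OF A, of i j j'] by (simp split: if_splits)
  next
    case False
    then have "m \<le> j" "m \<le> j'" "B $$ (i - m, j - m) \<noteq> 0" "B $$ (i - m, j' - m) \<noteq> 0"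
      using ij index by (simp_all split: if_splits)
    moreover from this have "j - m = j' - m"
      using SPP_row_unique[OF B, of "i - m" "j - m" "j' - m"] ij False by simp
    ultimately show ?thesis
      by simp
  qed
  show "i = i'" if ij: "i < m + k" "i' < m + k" "j < m + k" "?M $$ (i,j) \<noteq> 0" "?M $$ (i',j) \<noteq> 0"
    for i i' j
  proof (cases "j < m")
    case True
    then show ?thesis
      using ij index SPP_col_unique[OF A, of i i' j] by (simp split: if_splits)
  next
    case False
    then have "m \<le> i" "m \<le> i'" "B $$ (i - m, j - m) \<noteq> 0" "B $$ (i' - m, j - m) \<noteq> 0"
      using ij index by (simp_all split: if_splits)
    moreover from this have "i - m = i' - m"
      using SPP_col_unique[OF B, of "i - m" "i' - m" "j - m"] ij False by simp
    ultimately show ?thesis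
      by simp
  qed
qed

lemma perm_mat_mult_SPP:
  assumes p: "p permutes {..<n}" and X: "X \<in> SPP n"
  shows "perm_mat n p * X \<in> SPP n"
proof (rule SPPI)
  note X_carrier = SPP_carrier[OF X] and inv_less = permutes_lessThan_less(2)[OF p]
  have row: "(perm_mat n p * X) $$ (i,j) = X $$ (inv_into UNIV p i, j)" if "i < n" "j < n" for i j
    using perm_mat_mult_index[OF p X_carrier inv_less[OF that(1)] that(2)]
    by (simp add: permutes_inverses(1)[OF p])
  show "perm_mat n p * X \<in> carrier_mat n n"
    using mult_carrier_mat[OF perm_mat_carrier X_carrier] .
  show "(perm_mat n p * X) $$ (i,j) \<in> {-1,0,1}" if "i < n" "j < n" for i j
    using that row SPP_entry[OF X inv_less] by simp
  show "j = j'" if "i < n" "j < n" "j' < n" "(perm_mat n p * X) $$ (i,j) \<noteq> 0"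
    "(perm_mat n p * X) $$ (i,j') \<noteq> 0" for i j j'
    using that row SPP_row_unique[OF X inv_less] by simp
  show "i = i'" if "i < n" "i' < n" "j < n" "(perm_mat n p * X) $$ (i,j) \<noteq> 0"
    "(perm_mat n p * X) $$ (i',j) \<noteq> 0" for i i' j
  proof -
    have "inv_into UNIV p i = inv_into UNIV p i'"
      using that row SPP_col_unique[OF X inv_less inv_less] by simp
    then have "p (inv_into UNIV p i) = p (inv_into UNIV p i')"
      by simp
    then show "i = i'"
      unfolding permutes_inverses(1)[OF p] .
  qed
qed

lemma rows_from_carrier: "D \<in> carrier_mat nr nc \<Longrightarrow> rows_from i D \<in> carrier_mat (nr - i) nc"
  unfolding rows_from_def mat_of_rows_def by auto

lemma rows_from_index:
  assumes "D \<in> carrier_mat nr nc" "a < nr - i" "j < nc"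
  shows "rows_from i D $$ (a,j) = D $$ (i + a, j)"
  unfolding rows_from_def using assms by (subst mat_of_rows_index) auto

lemma nonzero_cols_rows_from:
  assumes D: "D \<in> carrier_mat nr nc"
  shows "nonzero_cols (rows_from i D) = {j. j < nc \<and> (\<exists>r. i \<le> r \<and> r < nr \<and> D $$ (r,j) \<noteq> 0)}"
proof -
  have dims: "dim_row (rows_from i D) = nr - i" "dim_col (rows_from i D) = nc"
    using rows_from_carrier[OF D] by auto
  have "(\<exists>a<nr - i. rows_from i D $$ (a,j) \<noteq> 0) \<longleftrightarrow> (\<exists>r. i \<le> r \<and> r < nr \<and> D $$ (r,j) \<noteq> 0)"
    if j: "j < nc" for j
  proof
    assume "\<exists>a<nr - i. rows_from i D $$ (a,j) \<noteq> 0"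
    then obtain a where "a < nr - i" "rows_from i D $$ (a,j) \<noteq> 0"
      by blast
    then show "\<exists>r. i \<le> r \<and> r < nr \<and> D $$ (r,j) \<noteq> 0"
      using rows_from_index[OF D _ j] by (intro exI[of _ "i + a"]) auto
  next
    assume "\<exists>r. i \<le> r \<and> r < nr \<and> D $$ (r,j) \<noteq> 0"
    then obtain r where "i \<le> r" "r < nr" "D $$ (r,j) \<noteq> 0"
      by blast
    then show "\<exists>a<nr - i. rows_from i D $$ (a,j) \<noteq> 0"
      using rows_from_index[OF D _ j, of "r - i" i] by (intro exI[of _ "r - i"]) auto
  qed
  then show ?thesis
    unfolding nonzero_cols_def dims by auto
qed

lemma ech_SPP:
  assumes D: "D \<in> SPP n"
  shows "ech D = {i. i < n \<and> (\<exists>j<n. D $$ (i,j) \<noteq> 0)}"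
proof -
  note D_carrier = SPP_carrier[OF D]
  define Z where "Z i = {j. j < n \<and> (\<exists>r. i \<le> r \<and> r < n \<and> D $$ (r,j) \<noteq> 0)}" for i
  have rank: "int_rank (rows_from i D) = card (Z i)" for i
  proof -
    have "int_rank (rows_from i D) = card (nonzero_cols (rows_from i D))"
    proof (rule int_rank_eq_card_nonzero_cols[OF rows_from_carrier[OF D_carrier]])
      fix a j j' assume "a < n - i" "j < n" "j' < n"
        "rows_from i D $$ (a,j) \<noteq> 0" "rows_from i D $$ (a,j') \<noteq> 0"
      then show "j = j'"
        using rows_from_index[OF D_carrier] SPP_row_unique[OF D, of "i + a" j j'] by simp
    qed
    then show ?thesis
      unfolding nonzero_cols_rows_from[OF D_carrier] Z_def .
  qed
  have "card (Z (Suc i)) < card (Z i) \<longleftrightarrow> (\<exists>j<n. D $$ (i,j) \<noteq> 0)" if i: "i < n" for i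
  proof -
    let ?row = "{j. j < n \<and> D $$ (i,j) \<noteq> 0}"
    have "(\<exists>r. i \<le> r \<and> Q r) \<longleftrightarrow> Q i \<or> (\<exists>r. Suc i \<le> r \<and> Q r)" for Q :: "nat \<Rightarrow> bool"
      by (metis Suc_leD le_eq_less_or_eq Suc_le_eq order_refl)
    then have "Z i = Z (Suc i) \<union> ?row"
      unfolding Z_def using i by auto
    moreover have "Z (Suc i) \<inter> ?row = {}"
      unfolding Z_def using SPP_col_unique[OF D] i by fastforce
    ultimately have "card (Z i) = card (Z (Suc i)) + card ?row"
      unfolding Z_def by (simp add: card_Un_disjoint)
    then show ?thesis
      by (auto simp: card_gt_0_iff)
  qed
  then show ?thesis
    unfolding ech_def rank using D_carrier by auto
qed

lemma card_lessThan_Collect_eq_iff: "card {j. j < n \<and> P j} = n \<longleftrightarrow> (\<forall>j<n. P j)"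
proof -
  have "card {j. j < n \<and> P j} = n \<longleftrightarrow> {j. j < n \<and> P j} = {..<n}"
    by (metis (no_types, lifting) card_lessThan card_subset_eq finite_lessThan lessThan_iff mem_Collect_eq
        subsetI)
  then show ?thesis
    by auto
qed

lemma int_rank_append_rows_SPP:
  assumes \<tau>1: "\<tau>1 \<in> SPP n" and \<tau>2: "\<tau>2 \<in> SPP n"
  shows "int_rank (\<tau>1 @\<^sub>r \<tau>2) = n \<longleftrightarrow>
    (\<forall>j<n. (\<exists>r<n. \<tau>1 $$ (r,j) \<noteq> 0) \<or> (\<exists>r<n. \<tau>2 $$ (r,j) \<noteq> 0))"
proof -
  note carriers = SPP_carrier[OF \<tau>1] SPP_carrier[OF \<tau>2]
  have "int_rank (\<tau>1 @\<^sub>r \<tau>2) = card (nonzero_cols (\<tau>1 @\<^sub>r \<tau>2))"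
  proof (rule int_rank_eq_card_nonzero_cols)
    show "\<tau>1 @\<^sub>r \<tau>2 \<in> carrier_mat (n + n) n"
      using carriers by simp
    fix r j j' assume "r < n + n" "j < n" "j' < n"
      "(\<tau>1 @\<^sub>r \<tau>2) $$ (r,j) \<noteq> 0" "(\<tau>1 @\<^sub>r \<tau>2) $$ (r,j') \<noteq> 0"
    then show "j = j'"
      using carriers SPP_row_unique[OF \<tau>1, of r j j'] SPP_row_unique[OF \<tau>2, of "r - n" j j']
      by (auto simp: append_rows_def split: if_splits)
  qed
  then show ?thesis
    unfolding nonzero_cols_append_rows[OF carriers] by (simp add: card_lessThan_Collect_eq_iff)
qed

section \<open>The representatives\<close>

lemma sigmaI_permutes:
  assumes I: "I \<subseteq> {..<n}"
  shows "sigmaI n I permutes {..<n}"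
proof -
  let ?L = "sorted_list_of_set I @ sorted_list_of_set ({..<n} - I)"
  have fin: "finite I"
    using I finite_subset by blast
  have "distinct ?L" "set ?L = {..<n}"
    using fin I by auto
  then have "bij_betw ((!) ?L) {..<n} {..<n}"
    using distinct_card[of ?L] by (intro bij_betw_nth) auto
  then have "bij_betw (sigmaI n I) {..<n} {..<n}"
    by (rule bij_betw_cong[THEN iffD1, rotated]) (auto simp: sigmaI_def)
  then show ?thesis
    by (rule bij_imp_permutes) (auto simp: sigmaI_def)
qed

lemma sigmaI_in_iff:
  assumes I: "I \<subseteq> {..<n}" and k: "k < n"
  shows "sigmaI n I k \<in> I \<longleftrightarrow> k < card I"
proof -
  let ?L1 = "sorted_list_of_set I" and ?L2 = "sorted_list_of_set ({..<n} - I)"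
  have fin: "finite I"
    using I finite_subset by blast
  have len: "length ?L1 = card I" "length ?L2 = n - card I"
    using fin I by (simp_all add: card_Diff_subset)
  show ?thesis
  proof (cases "k < card I")
    case True
    then have "sigmaI n I k \<in> set ?L1"
      using k len by (simp add: sigmaI_def nth_append)
    then show ?thesis
      using fin True by simp
  next
    case False
    then have "sigmaI n I k = ?L2 ! (k - card I)" "k - card I < length ?L2"
      using k len by (simp_all add: sigmaI_def nth_append)
    then have "sigmaI n I k \<in> set ?L2"
      using nth_mem[of "k - card I" ?L2] by simp
    then show ?thesis
      using False by simp
  qed
qed

lemma card_le_of_subset_lessThan: "I \<subseteq> {..<n} \<Longrightarrow> card I \<le> n"
  using subset_eq_atLeast0_lessThan_card[of I n] by (simp add: atLeast0LessThan)

lemma block_diag_transpose_mult_symmetric: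
  fixes \<tau> :: "'a :: comm_ring_1 mat" and k :: nat
  assumes \<tau>: "\<tau> \<in> carrier_mat m m" and sym: "transpose_mat \<tau> = \<tau>"
  defines "U \<equiv> four_block_mat \<tau> (0\<^sub>m m k) (0\<^sub>m k m) (1\<^sub>m k)"
    and "L \<equiv> four_block_mat (1\<^sub>m m) (0\<^sub>m m k) (0\<^sub>m k m) (0\<^sub>m k k)"
  shows "transpose_mat (transpose_mat U * L) = transpose_mat U * L"
proof -
  have "transpose_mat U = U"
    unfolding U_def using \<tau> sym by (subst transpose_four_block_mat) auto
  then have "transpose_mat U * L = U * L"
    by simp
  also have "\<dots> = four_block_mat \<tau> (0\<^sub>m m k) (0\<^sub>m k m) (0\<^sub>m k k)"
    unfolding U_def L_def using \<tau> by (subst mult_four_block_mat) auto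
  finally have UL: "transpose_mat U * L = four_block_mat \<tau> (0\<^sub>m m k) (0\<^sub>m k m) (0\<^sub>m k k)" .
  show ?thesis
    unfolding UL using \<tau> sym by (subst transpose_four_block_mat) auto
qed

definition PhiI_upper :: "nat \<Rightarrow> nat set \<Rightarrow> int mat \<Rightarrow> int mat" where
  "PhiI_upper n I \<tau> = perm_mat n (sigmaI n I) *
     four_block_mat \<tau> (0\<^sub>m (card I) (n - card I)) (0\<^sub>m (n - card I) (card I)) (1\<^sub>m (n - card I))"

definition PhiI_lower :: "nat \<Rightarrow> nat set \<Rightarrow> int mat" where
  "PhiI_lower n I = perm_mat n (sigmaI n I) *
     four_block_mat (1\<^sub>m (card I)) (0\<^sub>m (card I) (n - card I)) (0\<^sub>m (n - card I) (card I))
       (0\<^sub>m (n - card I) (n - card I))"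

context
  fixes n :: nat and I :: "nat set"
  assumes I: "I \<subseteq> {..<n}"
begin

lemma upper_block_carrier:
  assumes "\<tau> \<in> carrier_mat (card I) (card I)"
  shows "four_block_mat \<tau> (0\<^sub>m (card I) (n - card I)) (0\<^sub>m (n - card I) (card I)) (1\<^sub>m (n - card I))
    \<in> carrier_mat n n"
  using assms four_block_carrier_mat[of \<tau> "card I" "card I" "1\<^sub>m (n - card I)" "n - card I" "n - card I"]
    card_le_of_subset_lessThan[OF I] by simp

lemma lower_block_carrier:
  "four_block_mat (1\<^sub>m (card I)) (0\<^sub>m (card I) (n - card I)) (0\<^sub>m (n - card I) (card I))
    (0\<^sub>m (n - card I) (n - card I)) \<in> carrier_mat n n"
  using four_block_carrier_mat[of "1\<^sub>m (card I)" "card I" "card I" "0\<^sub>m (n - card I) (n - card I)"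
      "n - card I" "n - card I"]
    card_le_of_subset_lessThan[OF I] by simp

lemma PhiI_upper_carrier: "\<tau> \<in> carrier_mat (card I) (card I) \<Longrightarrow> PhiI_upper n I \<tau> \<in> carrier_mat n n"
  unfolding PhiI_upper_def by (rule mult_carrier_mat[OF perm_mat_carrier upper_block_carrier])

lemma PhiI_lower_carrier: "PhiI_lower n I \<in> carrier_mat n n"
  unfolding PhiI_lower_def by (rule mult_carrier_mat[OF perm_mat_carrier lower_block_carrier])

lemma PhiI_eq_append_rows:
  "\<tau> \<in> carrier_mat (card I) (card I) \<Longrightarrow> PhiI n I \<tau> = PhiI_upper n I \<tau> @\<^sub>r PhiI_lower n I"
  unfolding PhiI_def PhiI_upper_def PhiI_lower_def Let_def
  by (rule dblock_mult_append_rows[OF perm_mat_carrier upper_block_carrier lower_block_carrier])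

lemma PhiI_upper_index:
  assumes \<tau>: "\<tau> \<in> carrier_mat (card I) (card I)" and kj: "k < n" "j < n"
  shows "PhiI_upper n I \<tau> $$ (sigmaI n I k, j) =
    (if k < card I then if j < card I then \<tau> $$ (k,j) else 0 else if k = j then 1 else 0)"
  unfolding PhiI_upper_def perm_mat_mult_index[OF sigmaI_permutes[OF I] upper_block_carrier[OF \<tau>] kj]
  using \<tau> kj by auto

lemma PhiI_lower_index:
  assumes kj: "k < n" "j < n"
  shows "PhiI_lower n I $$ (sigmaI n I k, j) = (if k = j \<and> k < card I then 1 else 0)"
  unfolding PhiI_lower_def perm_mat_mult_index[OF sigmaI_permutes[OF I] lower_block_carrier kj]
  using kj by simp

lemma PhiI_upper_SPP: "\<tau> \<in> SPP (card I) \<Longrightarrow> PhiI_upper n I \<tau> \<in> SPP n"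
  unfolding PhiI_upper_def
  using block_diag_SPP[of \<tau> "card I" "1\<^sub>m (n - card I)" "n - card I"] one_mat_SPP
    card_le_of_subset_lessThan[OF I]
  by (intro perm_mat_mult_SPP[OF sigmaI_permutes[OF I]]) simp

lemma PhiI_lower_SPP: "PhiI_lower n I \<in> SPP n"
  unfolding PhiI_lower_def
  using block_diag_SPP[of "1\<^sub>m (card I)" "card I" "0\<^sub>m (n - card I) (n - card I)" "n - card I"]
    one_mat_SPP zero_mat_SPP card_le_of_subset_lessThan[OF I]
  by (intro perm_mat_mult_SPP[OF sigmaI_permutes[OF I]]) simp

lemma PhiI_symmetric:
  assumes "\<tau> \<in> carrier_mat (card I) (card I)" "transpose_mat \<tau> = \<tau>"
  shows "transpose_mat (transpose_mat (PhiI_upper n I \<tau>) * PhiI_lower n I) =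
    transpose_mat (PhiI_upper n I \<tau>) * PhiI_lower n I"
  unfolding PhiI_upper_def PhiI_lower_def
    transpose_perm_mat_mult_cancel[OF sigmaI_permutes[OF I] upper_block_carrier[OF assms(1)] lower_block_carrier]
  using assms by (rule block_diag_transpose_mult_symmetric)

lemma ech_PhiI_lower: "ech (PhiI_lower n I) = I"
proof -
  have "(\<exists>j<n. PhiI_lower n I $$ (r,j) \<noteq> 0) \<longleftrightarrow> r \<in> I" if r: "r < n" for r
  proof -
    let ?k = "inv_into UNIV (sigmaI n I) r"
    have k: "?k < n" "sigmaI n I ?k = r"
      using permutes_lessThan_less(2)[OF sigmaI_permutes[OF I] r]
        permutes_inverses(1)[OF sigmaI_permutes[OF I]] by auto
    have "(\<exists>j<n. PhiI_lower n I $$ (sigmaI n I ?k, j) \<noteq> 0) \<longleftrightarrow> ?k < card I"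
      using PhiI_lower_index[OF k(1)] k(1) by (auto split: if_splits)
    then show ?thesis
      using sigmaI_in_iff[OF I k(1)] k(2) by simp
  qed
  then show ?thesis
    unfolding ech_SPP[OF PhiI_lower_SPP] using I by auto
qed

lemma int_rank_PhiI:
  assumes \<tau>: "\<tau> \<in> SPP (card I)"
  shows "int_rank (PhiI_upper n I \<tau> @\<^sub>r PhiI_lower n I) = n"
proof -
  have "(\<exists>r<n. PhiI_upper n I \<tau> $$ (r,j) \<noteq> 0) \<or> (\<exists>r<n. PhiI_lower n I $$ (r,j) \<noteq> 0)"
    if j: "j < n" for j
    using PhiI_upper_index[OF SPP_carrier[OF \<tau>] j j] PhiI_lower_index[OF j j]
      permutes_lessThan_less(1)[OF sigmaI_permutes[OF I] j]
    by (cases "j < card I") auto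
  then show ?thesis
    by (simp add: int_rank_append_rows_SPP[OF PhiI_upper_SPP[OF \<tau>] PhiI_lower_SPP])
qed

lemma PhiI_eq_action_iff:
  assumes "\<tau> \<in> carrier_mat (card I) (card I)" "\<tau>' \<in> carrier_mat (card I) (card I)"
    and "E \<in> carrier_mat n n" "G \<in> carrier_mat n n"
  shows "PhiI n I \<tau>' = dblock n E * PhiI n I \<tau> * G \<longleftrightarrow>
    PhiI_upper n I \<tau>' = E * PhiI_upper n I \<tau> * G \<and> PhiI_lower n I = E * PhiI_lower n I * G"
proof -
  have "E * PhiI_upper n I \<tau> * G \<in> carrier_mat n n" "E * PhiI_lower n I * G \<in> carrier_mat n n"
    using assms PhiI_upper_carrier PhiI_lower_carrier by (auto intro!: mult_carrier_mat)
  then show ?thesis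
    unfolding PhiI_eq_append_rows[OF assms(1)] PhiI_eq_append_rows[OF assms(2)]
      dblock_action_append_rows[OF assms(3) PhiI_upper_carrier[OF assms(1)] PhiI_lower_carrier assms(4)]
    by (intro append_rows_inject[OF PhiI_upper_carrier[OF assms(2)] _ PhiI_lower_carrier])
qed

end

lemma OmegaI_I:
  assumes "\<tau>1 \<in> SPP n" "\<tau>2 \<in> SPP n"
    and "transpose_mat (transpose_mat \<tau>1 * \<tau>2) = transpose_mat \<tau>1 * \<tau>2"
    and "int_rank (\<tau>1 @\<^sub>r \<tau>2) = n" and "ech \<tau>2 = I"
  shows "\<tau>1 @\<^sub>r \<tau>2 \<in> OmegaI n I"
proof -
  have "\<tau>1 @\<^sub>r \<tau>2 \<in> Omega0 n"
    unfolding Omega0_def using assms(1-4) by (intro CollectI exI[of _ \<tau>1] exI[of _ \<tau>2]) simp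
  then show ?thesis
    unfolding OmegaI_def using assms(5) SPP_carrier[OF assms(1)] SPP_carrier[OF assms(2)]
    by (intro CollectI exI[of _ \<tau>1] exI[of _ \<tau>2]) simp
qed

lemma OmegaI_E:
  assumes "\<omega> \<in> OmegaI n I"
  obtains \<tau>1 \<tau>2 where "\<omega> = \<tau>1 @\<^sub>r \<tau>2" "\<tau>1 \<in> SPP n" "\<tau>2 \<in> SPP n"
    "transpose_mat (transpose_mat \<tau>1 * \<tau>2) = transpose_mat \<tau>1 * \<tau>2"
    "int_rank (\<tau>1 @\<^sub>r \<tau>2) = n" "ech \<tau>2 = I"
proof -
  obtain \<tau>1 \<tau>2 \<tau>1' \<tau>2' where \<omega>: "\<omega> = \<tau>1 @\<^sub>r \<tau>2" "\<tau>1 \<in> carrier_mat n n" "\<tau>2 \<in> carrier_mat n n"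
    "ech \<tau>2 = I" and eq: "\<tau>1 @\<^sub>r \<tau>2 = \<tau>1' @\<^sub>r \<tau>2'" and \<tau>': "\<tau>1' \<in> SPP n" "\<tau>2' \<in> SPP n"
    "transpose_mat (transpose_mat \<tau>1' * \<tau>2') = transpose_mat \<tau>1' * \<tau>2'"
    "int_rank (\<tau>1' @\<^sub>r \<tau>2') = n"
    using assms unfolding OmegaI_def Omega0_def by blast
  have "\<tau>1 = \<tau>1'" "\<tau>2 = \<tau>2'"
    using eq append_rows_inject[OF \<omega>(2) SPP_carrier[OF \<tau>'(1)] \<omega>(3) SPP_carrier[OF \<tau>'(2)]] by simp_all
  then show ?thesis
    using that \<omega> \<tau>' by simp
qed

lemma PhiI_in_OmegaI:
  assumes I: "I \<subseteq> {..<n}" and \<tau>: "\<tau> \<in> SPI (card I)"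
  shows "PhiI n I \<tau> \<in> OmegaI n I"
proof -
  have \<tau>_SPP: "\<tau> \<in> SPP (card I)" and sym: "transpose_mat \<tau> = \<tau>"
    using \<tau> unfolding SPI_def by auto
  show ?thesis
    unfolding PhiI_eq_append_rows[OF I SPP_carrier[OF \<tau>_SPP]]
    by (rule OmegaI_I[OF PhiI_upper_SPP[OF I \<tau>_SPP] PhiI_lower_SPP[OF I]
        PhiI_symmetric[OF I SPP_carrier[OF \<tau>_SPP] sym] int_rank_PhiI[OF I \<tau>_SPP] ech_PhiI_lower[OF I]])
qed

section \<open>Well-definedness and injectivity\<close>

context
  fixes n :: nat and I :: "nat set"
  assumes I: "I \<subseteq> {..<n}"
begin

lemma sign_action_at_sigmaI:
  assumes "X \<in> carrier_mat n n" "k < n" "j < n"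
  shows "(diagonal_mat n (\<lambda>r. g (inv_into UNIV (sigmaI n I) r)) * X * diagonal_mat n g) $$ (sigmaI n I k, j)
    = g k * X $$ (sigmaI n I k, j) * g j"
  using sign_action_index[OF assms(1) permutes_id permutes_lessThan_less(1)[OF sigmaI_permutes[OF I] assms(2)]
      assms(3), of "\<lambda>r. g (inv_into UNIV (sigmaI n I) r)" g]
  by (simp add: permutes_inverses(2)[OF sigmaI_permutes[OF I]])

lemma PhiI_upper_sign_conj:
  fixes e :: "nat \<Rightarrow> int"
  assumes \<tau>: "\<tau> \<in> carrier_mat (card I) (card I)"
  defines "g \<equiv> \<lambda>j. if j < card I then e j else 1"
  shows "PhiI_upper n I (diagonal_mat (card I) e * \<tau> * diagonal_mat (card I) e) =
    diagonal_mat n (\<lambda>r. g (inv_into UNIV (sigmaI n I) r)) * PhiI_upper n I \<tau> * diagonal_mat n g"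
proof (rule eq_mat_on_permuted_rowsI[OF _ _ sigmaI_permutes[OF I]])
  let ?\<tau>' = "diagonal_mat (card I) e * \<tau> * diagonal_mat (card I) e"
  have \<tau>': "?\<tau>' \<in> carrier_mat (card I) (card I)"
    using \<tau> by (intro mult_carrier_mat) auto
  then show "PhiI_upper n I ?\<tau>' \<in> carrier_mat n n"
    by (rule PhiI_upper_carrier[OF I])
  show "diagonal_mat n (\<lambda>r. g (inv_into UNIV (sigmaI n I) r)) * PhiI_upper n I \<tau> * diagonal_mat n g
      \<in> carrier_mat n n"
    using PhiI_upper_carrier[OF I \<tau>] by (intro mult_carrier_mat) auto
  fix k j assume kj: "k < n" "j < n"
  have "?\<tau>' $$ (k,j) = e k * \<tau> $$ (k,j) * e j" if "k < card I" "j < card I"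
    using sign_action_index[OF \<tau> permutes_id that, of e e] by simp
  then show "PhiI_upper n I ?\<tau>' $$ (sigmaI n I k, j) =
      (diagonal_mat n (\<lambda>r. g (inv_into UNIV (sigmaI n I) r)) * PhiI_upper n I \<tau> * diagonal_mat n g)
        $$ (sigmaI n I k, j)"
    unfolding sign_action_at_sigmaI[OF PhiI_upper_carrier[OF I \<tau>] kj]
      PhiI_upper_index[OF I \<tau> kj] PhiI_upper_index[OF I \<tau>' kj]
    by (auto simp: g_def)
qed

lemma PhiI_lower_sign_invariant:
  assumes g: "\<forall>j<n. g j \<in> {1,-1}"
  shows "PhiI_lower n I = diagonal_mat n (\<lambda>r. g (inv_into UNIV (sigmaI n I) r)) * PhiI_lower n I * diagonal_mat n g"
proof (rule eq_mat_on_permuted_rowsI[OF PhiI_lower_carrier[OF I] _ sigmaI_permutes[OF I]])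
  show "diagonal_mat n (\<lambda>r. g (inv_into UNIV (sigmaI n I) r)) * PhiI_lower n I * diagonal_mat n g
      \<in> carrier_mat n n"
    using PhiI_lower_carrier[OF I] by (intro mult_carrier_mat) auto
  fix k j assume kj: "k < n" "j < n"
  then show "PhiI_lower n I $$ (sigmaI n I k, j) =
      (diagonal_mat n (\<lambda>r. g (inv_into UNIV (sigmaI n I) r)) * PhiI_lower n I * diagonal_mat n g)
        $$ (sigmaI n I k, j)"
    unfolding sign_action_at_sigmaI[OF PhiI_lower_carrier[OF I] kj] PhiI_lower_index[OF I kj]
    using g sign_square by auto
qed

lemma PhiI_lower_stabilizer:
  assumes e: "\<forall>i<n. e i \<in> {1,-1}" and p: "p permutes {..<n}" and s: "\<forall>j<n. s j \<in> {1,-1}"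
    and lower: "PhiI_lower n I = diagonal_mat n e * PhiI_lower n I * monomial_mat n p s"
    and i: "i < card I"
  shows "p i = i" and "e (sigmaI n I i) = s i"
proof -
  have "i < n"
    using i card_le_of_subset_lessThan[OF I] by simp
  have "1 = PhiI_lower n I $$ (sigmaI n I i, i)"
    using PhiI_lower_index[OF I \<open>i < n\<close> \<open>i < n\<close>] i by simp
  also have "\<dots> = (diagonal_mat n e * PhiI_lower n I * monomial_mat n p s) $$ (sigmaI n I i, i)"
    by (rule arg_cong[OF lower])
  also have "\<dots> = e (sigmaI n I i) * PhiI_lower n I $$ (sigmaI n I i, p i) * s i"
    by (rule sign_action_index[OF PhiI_lower_carrier[OF I] p
          permutes_lessThan_less(1)[OF sigmaI_permutes[OF I] \<open>i < n\<close>] \<open>i < n\<close>])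
  also have "\<dots> = (if i = p i then e (sigmaI n I i) * s i else 0)"
    using PhiI_lower_index[OF I \<open>i < n\<close> permutes_lessThan_less(1)[OF p \<open>i < n\<close>]] i by simp
  finally have "i = p i" "e (sigmaI n I i) * s i = 1"
    by (simp_all split: if_splits)
  moreover have "e (sigmaI n I i) \<in> {1,-1}" "s i \<in> {1,-1}"
    using e s permutes_lessThan_less(1)[OF sigmaI_permutes[OF I] \<open>i < n\<close>] \<open>i < n\<close> by auto
  ultimately show "p i = i" "e (sigmaI n I i) = s i"
    by auto
qed

end

lemma PhiI_respects_SPI_rel:
  assumes I: "I \<subseteq> {..<n}" and rel: "(\<tau>, \<tau>') \<in> SPI_rel (card I)"
  shows "(PhiI n I \<tau>, PhiI n I \<tau>') \<in> Omega_rel n I"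
proof -
  obtain E where \<tau>: "\<tau> \<in> SPI (card I)" and \<tau>': "\<tau>' \<in> SPI (card I)" and E: "E \<in> sign_diags (card I)"
    and \<tau>'_eq: "\<tau>' = E * \<tau> * E"
    using rel unfolding SPI_rel_def by blast
  obtain e where e: "\<forall>i<card I. e i \<in> {1,-1}" and E_eq: "E = diagonal_mat (card I) e"
    using E by (rule sign_diagsE)
  define g where "g j = (if j < card I then e j else 1)" for j
  define E' where "E' = diagonal_mat n (\<lambda>r. g (inv_into UNIV (sigmaI n I) r))"
  have g: "\<forall>j<n. g j \<in> {1,-1}"
    using e unfolding g_def by auto
  have E': "E' \<in> sign_diags n"
    unfolding E'_def using g permutes_lessThan_less(2)[OF sigmaI_permutes[OF I]]
    by (intro diagonal_mat_in_sign_diags) simp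
  have G: "diagonal_mat n g \<in> signed_perms n"
    using g by (rule monomial_mat_in_signed_perms[OF permutes_id])
  have "PhiI_upper n I \<tau>' = E' * PhiI_upper n I \<tau> * diagonal_mat n g"
    using PhiI_upper_sign_conj[OF I SPI_carrier[OF \<tau>], of e] unfolding \<tau>'_eq E_eq E'_def g_def by simp
  moreover have "PhiI_lower n I = E' * PhiI_lower n I * diagonal_mat n g"
    unfolding E'_def by (rule PhiI_lower_sign_invariant[OF I g])
  ultimately have "PhiI n I \<tau>' = dblock n E' * PhiI n I \<tau> * diagonal_mat n g"
    unfolding PhiI_eq_action_iff[OF I SPI_carrier[OF \<tau>] SPI_carrier[OF \<tau>'] sign_diags_carrier[OF E']
        signed_perms_carrier[OF G]]
    by (rule conjI)
  then show ?thesis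
    by (rule Omega_relI[OF PhiI_in_OmegaI[OF I \<tau>] PhiI_in_OmegaI[OF I \<tau>'] E' G])
qed

lemma PhiI_reflects_Omega_rel:
  assumes I: "I \<subseteq> {..<n}" and \<tau>: "\<tau> \<in> SPI (card I)" and \<tau>': "\<tau>' \<in> SPI (card I)"
    and rel: "(PhiI n I \<tau>, PhiI n I \<tau>') \<in> Omega_rel n I"
  shows "(\<tau>, \<tau>') \<in> SPI_rel (card I)"
proof -
  note carriers = SPI_carrier[OF \<tau>] SPI_carrier[OF \<tau>']
  obtain E G where E: "E \<in> sign_diags n" and G: "G \<in> signed_perms n"
    and eq: "PhiI n I \<tau>' = dblock n E * PhiI n I \<tau> * G"
    using rel unfolding Omega_rel_def by blast
  obtain e where e: "\<forall>i<n. e i \<in> {1,-1}" and E_eq: "E = diagonal_mat n e"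
    using E by (rule sign_diagsE)
  obtain p s where p: "p permutes {..<n}" and s: "\<forall>j<n. s j \<in> {1,-1}" and G_eq: "G = monomial_mat n p s"
    using G by (rule signed_permsE)
  have blocks: "PhiI_upper n I \<tau>' = E * PhiI_upper n I \<tau> * G \<and> PhiI_lower n I = E * PhiI_lower n I * G"
    using eq unfolding PhiI_eq_action_iff[OF I carriers sign_diags_carrier[OF E] signed_perms_carrier[OF G]] .
  note upper = conjunct1[OF blocks] and lower = conjunct2[OF blocks]
  note stable = PhiI_lower_stabilizer[OF I e p s lower[unfolded E_eq G_eq]]
  have "\<tau>' = diagonal_mat (card I) s * \<tau> * diagonal_mat (card I) s"
  proof (rule eq_matI)
    fix i j assume "i < dim_row (diagonal_mat (card I) s * \<tau> * diagonal_mat (card I) s)"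
      "j < dim_col (diagonal_mat (card I) s * \<tau> * diagonal_mat (card I) s)"
    then have ij: "i < card I" "j < card I"
      by auto
    then have ij_n: "i < n" "j < n"
      using card_le_of_subset_lessThan[OF I] by auto
    have "\<tau>' $$ (i,j) = PhiI_upper n I \<tau>' $$ (sigmaI n I i, j)"
      using PhiI_upper_index[OF I carriers(2) ij_n] ij by simp
    also have "\<dots> = e (sigmaI n I i) * PhiI_upper n I \<tau> $$ (sigmaI n I i, p j) * s j"
      unfolding upper E_eq G_eq
      by (rule sign_action_index[OF PhiI_upper_carrier[OF I carriers(1)] p
            permutes_lessThan_less(1)[OF sigmaI_permutes[OF I] ij_n(1)] ij_n(2)])
    also have "\<dots> = s i * \<tau> $$ (i,j) * s j"
      using PhiI_upper_index[OF I carriers(1) ij_n] ij stable by simp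
    also have "\<dots> = (diagonal_mat (card I) s * \<tau> * diagonal_mat (card I) s) $$ (i,j)"
      using sign_action_index[OF carriers(1) permutes_id ij, of s s] by simp
    finally show "\<tau>' $$ (i,j) = (diagonal_mat (card I) s * \<tau> * diagonal_mat (card I) s) $$ (i,j)" .
  qed (use carriers in auto)
  moreover have "diagonal_mat (card I) s \<in> sign_diags (card I)"
    using s card_le_of_subset_lessThan[OF I] by (intro diagonal_mat_in_sign_diags) simp
  ultimately show ?thesis
    unfolding SPI_rel_def using \<tau> \<tau>' by (auto intro!: bexI[of _ "diagonal_mat (card I) s"])
qed

section \<open>Surjectivity\<close>

locale OmegaI_member =
  fixes n :: nat and I :: "nat set" and \<tau>1 \<tau>2 :: "int mat"
  assumes I: "I \<subseteq> {..<n}"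
    and \<tau>1: "\<tau>1 \<in> SPP n" and \<tau>2: "\<tau>2 \<in> SPP n"
    and product_sym: "transpose_mat (transpose_mat \<tau>1 * \<tau>2) = transpose_mat \<tau>1 * \<tau>2"
    and full_rank: "int_rank (\<tau>1 @\<^sub>r \<tau>2) = n"
    and ech_\<tau>2: "ech \<tau>2 = I"
begin

abbreviation "\<sigma> \<equiv> sigmaI n I"
abbreviation "m \<equiv> card I"

lemma \<sigma>_permutes: "\<sigma> permutes {..<n}"
  by (rule sigmaI_permutes[OF I])

lemma \<sigma>_less: "k < n \<Longrightarrow> \<sigma> k < n"
  by (rule permutes_lessThan_less(1)[OF \<sigma>_permutes])

lemma m_le: "m \<le> n"
  by (rule card_le_of_subset_lessThan[OF I])

lemma \<tau>2_row_nonzero_iff: "r < n \<Longrightarrow> (\<exists>c<n. \<tau>2 $$ (r,c) \<noteq> 0) \<longleftrightarrow> r \<in> I"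
  using ech_SPP[OF \<tau>2] ech_\<tau>2 by auto

lemma \<tau>2_row_zero:
  assumes "m \<le> k" "k < n" "c < n"
  shows "\<tau>2 $$ (\<sigma> k, c) = 0"
proof -
  have "\<sigma> k \<notin> I"
    using sigmaI_in_iff[OF I assms(2)] assms(1) by simp
  then show ?thesis
    using \<tau>2_row_nonzero_iff[OF \<sigma>_less[OF assms(2)]] assms(3) by blast
qed

lemma symmetric_entry:
  assumes ab: "a < n" "b < n"
  shows "(\<Sum>r<n. \<tau>1 $$ (r,a) * \<tau>2 $$ (r,b)) = (\<Sum>r<n. \<tau>1 $$ (r,b) * \<tau>2 $$ (r,a))"
proof -
  note carriers = SPP_carrier[OF \<tau>1] SPP_carrier[OF \<tau>2]
  have "(\<Sum>r<n. \<tau>1 $$ (r,a) * \<tau>2 $$ (r,b)) = (transpose_mat \<tau>1 * \<tau>2) $$ (a,b)"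
    by (rule transpose_mult_index[OF carriers ab, symmetric])
  also have "\<dots> = transpose_mat (transpose_mat \<tau>1 * \<tau>2) $$ (a,b)"
    by (simp only: product_sym)
  also have "\<dots> = (transpose_mat \<tau>1 * \<tau>2) $$ (b,a)"
    using carriers ab by (intro index_transpose_mat(1)) auto
  also have "\<dots> = (\<Sum>r<n. \<tau>1 $$ (r,b) * \<tau>2 $$ (r,a))"
    by (rule transpose_mult_index[OF carriers ab(2,1)])
  finally show ?thesis .
qed

definition \<tau>2_col :: "nat \<Rightarrow> nat" where
  "\<tau>2_col k = (SOME c. c < n \<and> \<tau>2 $$ (\<sigma> k, c) \<noteq> 0)"

lemma \<tau>2_col: "k < m \<Longrightarrow> \<tau>2_col k < n \<and> \<tau>2 $$ (\<sigma> k, \<tau>2_col k) \<noteq> 0"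
proof -
  assume k: "k < m"
  then have "\<sigma> k \<in> I"
    using sigmaI_in_iff[OF I] m_le by simp
  then have "\<exists>c. c < n \<and> \<tau>2 $$ (\<sigma> k, c) \<noteq> 0"
    using \<tau>2_row_nonzero_iff[OF \<sigma>_less] k m_le by auto
  then show ?thesis
    unfolding \<tau>2_col_def by (rule someI_ex)
qed

lemma \<tau>2_nonzero_at_\<tau>2_col:
  assumes "k < m" "c < n" "\<tau>2 $$ (\<sigma> k, c) \<noteq> 0"
  shows "c = \<tau>2_col k"
  using SPP_row_unique[OF \<tau>2 \<sigma>_less assms(2) _ assms(3)] \<tau>2_col[OF assms(1)] assms(1) m_le by simp

lemma \<tau>2_col_inj: "inj_on \<tau>2_col {..<m}"
proof
  fix k k' assume kk': "k \<in> {..<m}" "k' \<in> {..<m}" "\<tau>2_col k = \<tau>2_col k'"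
  then have "\<sigma> k = \<sigma> k'"
    using SPP_col_unique[OF \<tau>2 \<sigma>_less \<sigma>_less, of k k' "\<tau>2_col k"] \<tau>2_col m_le by fastforce
  then show "k = k'"
    using permutes_inj[OF \<sigma>_permutes] by (simp add: inj_eq)
qed

definition J :: "nat set" where
  "J = \<tau>2_col ` {..<m}"

lemma J_subset: "J \<subseteq> {..<n}"
  unfolding J_def using \<tau>2_col by auto

lemma card_J: "card J = m"
  unfolding J_def using card_image[OF \<tau>2_col_inj] by simp

lemma \<tau>2_nonzero_in_J:
  assumes "r < n" "c < n" "\<tau>2 $$ (r,c) \<noteq> 0"
  shows "c \<in> J"
proof -
  let ?k = "inv_into UNIV \<sigma> r"
  have r: "\<sigma> ?k = r" "?k < n"
    using permutes_inverses(1)[OF \<sigma>_permutes] permutes_lessThan_less(2)[OF \<sigma>_permutes assms(1)] by auto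
  then have "?k < m"
    using assms \<tau>2_row_nonzero_iff sigmaI_in_iff[OF I] by metis
  then show ?thesis
    using \<tau>2_nonzero_at_\<tau>2_col[of ?k c] assms r unfolding J_def by auto
qed

lemma \<tau>1_zero_outside_J:
  assumes k: "k < m" and c: "c < n" "c \<notin> J"
  shows "\<tau>1 $$ (\<sigma> k, c) = 0"
proof -
  have kn: "k < n"
    using k m_le by simp
  note col = \<tau>2_col[OF k]
  have "(\<Sum>r<n. \<tau>1 $$ (r,c) * \<tau>2 $$ (r, \<tau>2_col k)) = \<tau>1 $$ (\<sigma> k, c) * \<tau>2 $$ (\<sigma> k, \<tau>2_col k)"
  proof (rule sum_eq_single)
    fix r assume "r \<in> {..<n}" "r \<noteq> \<sigma> k"
    then show "\<tau>1 $$ (r,c) * \<tau>2 $$ (r, \<tau>2_col k) = 0"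
      using SPP_col_unique[OF \<tau>2 _ \<sigma>_less[OF kn], of r "\<tau>2_col k"] col by auto
  qed (use \<sigma>_less[OF kn] in auto)
  moreover have "(\<Sum>r<n. \<tau>1 $$ (r, \<tau>2_col k) * \<tau>2 $$ (r,c)) = 0"
    using \<tau>2_nonzero_in_J[of _ c] c by (intro sum.neutral) auto
  ultimately have "\<tau>1 $$ (\<sigma> k, c) * \<tau>2 $$ (\<sigma> k, \<tau>2_col k) = 0"
    using symmetric_entry[OF c(1), of "\<tau>2_col k"] col by simp
  then show ?thesis
    using col by simp
qed

lemma \<tau>1_col_nonzero_outside_J:
  assumes c: "c < n" "c \<notin> J"
  shows "\<exists>r<n. \<tau>1 $$ (r,c) \<noteq> 0"
  using full_rank int_rank_append_rows_SPP[OF \<tau>1 \<tau>2] c \<tau>2_nonzero_in_J by blast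

definition C :: "nat set" where
  "C = {..<n} - J"

definition \<tau>1_row :: "nat \<Rightarrow> nat" where
  "\<tau>1_row c = (SOME r. r < n \<and> \<tau>1 $$ (r,c) \<noteq> 0)"

lemma \<tau>1_row:
  assumes c: "c \<in> C"
  shows "\<tau>1_row c < n" "\<tau>1 $$ (\<tau>1_row c, c) \<noteq> 0" "\<tau>1_row c \<notin> I"
proof -
  have cn: "c < n" "c \<notin> J"
    using c unfolding C_def by auto
  have "\<tau>1_row c < n \<and> \<tau>1 $$ (\<tau>1_row c, c) \<noteq> 0"
    unfolding \<tau>1_row_def using \<tau>1_col_nonzero_outside_J[OF cn] by (rule someI_ex)
  then show row: "\<tau>1_row c < n" "\<tau>1 $$ (\<tau>1_row c, c) \<noteq> 0"
    by auto
  show "\<tau>1_row c \<notin> I"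
  proof
    assume "\<tau>1_row c \<in> I"
    then have k: "inv_into UNIV \<sigma> (\<tau>1_row c) < m"
      using sigmaI_in_iff[OF I permutes_lessThan_less(2)[OF \<sigma>_permutes row(1)]]
        permutes_inverses(1)[OF \<sigma>_permutes] by simp
    have "\<tau>1 $$ (\<sigma> (inv_into UNIV \<sigma> (\<tau>1_row c)), c) = 0"
      by (rule \<tau>1_zero_outside_J[OF k cn])
    then show False
      using row permutes_inverses(1)[OF \<sigma>_permutes] by simp
  qed
qed

lemma \<tau>1_row_bij: "bij_betw \<tau>1_row C ({..<n} - I)"
proof -
  have inj: "inj_on \<tau>1_row C"
  proof
    fix c c' assume cc': "c \<in> C" "c' \<in> C" "\<tau>1_row c = \<tau>1_row c'"
    then show "c = c'"
      using SPP_row_unique[OF \<tau>1 \<tau>1_row(1)[OF cc'(1)], of c c'] \<tau>1_row[OF cc'(1)] \<tau>1_row[OF cc'(2)]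
      unfolding C_def by auto
  qed
  moreover have "\<tau>1_row ` C \<subseteq> {..<n} - I"
    using \<tau>1_row by auto
  moreover have "card C = card ({..<n} - I)"
    unfolding C_def using card_Diff_subset[OF finite_subset[OF J_subset] J_subset] card_J
      card_Diff_subset[OF finite_subset[OF I] I] by simp
  ultimately show ?thesis
    unfolding bij_betw_def
    by (metis card_image card_subset_eq finite_Diff finite_lessThan)
qed

text \<open>Row \<open>\<sigma> k\<close> of \<open>\<tau>2\<close> (for \<open>k < m\<close>), resp. of \<open>\<tau>1\<close> (for \<open>k \<ge> m\<close>), has its only nonzero
  entry \<open>\<epsilon> k\<close> in column \<open>\<pi> k\<close>; right multiplication by \<open>monomial_mat n \<pi> \<epsilon>\<close> moves it to the
  diagonal position \<open>(\<sigma> k, k)\<close> and makes it \<open>1\<close>.\<close>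

definition \<pi> :: "nat \<Rightarrow> nat" where
  "\<pi> k = (if k < m then \<tau>2_col k else if k < n then the_inv_into C \<tau>1_row (\<sigma> k) else k)"

definition \<epsilon> :: "nat \<Rightarrow> int" where
  "\<epsilon> k = (if k < m then \<tau>2 $$ (\<sigma> k, \<pi> k) else \<tau>1 $$ (\<sigma> k, \<pi> k))"

lemma \<pi>_low: "k < m \<Longrightarrow> \<pi> k \<in> J \<and> \<tau>2 $$ (\<sigma> k, \<pi> k) \<noteq> 0"
  unfolding \<pi>_def J_def using \<tau>2_col by auto

lemma \<pi>_high:
  assumes "m \<le> k" "k < n"
  shows "\<pi> k \<in> C" "\<tau>1_row (\<pi> k) = \<sigma> k"
proof -
  have "\<sigma> k \<in> \<tau>1_row ` C"
    using \<tau>1_row_bij sigmaI_in_iff[OF I assms(2)] \<sigma>_less[OF assms(2)] assms(1)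
    unfolding bij_betw_def by auto
  then show "\<pi> k \<in> C" "\<tau>1_row (\<pi> k) = \<sigma> k"
    using assms the_inv_into_into[OF bij_betw_imp_inj_on[OF \<tau>1_row_bij], of "\<sigma> k" C]
      f_the_inv_into_f[OF bij_betw_imp_inj_on[OF \<tau>1_row_bij]]
    unfolding \<pi>_def by auto
qed

lemma \<pi>_less: "k < n \<Longrightarrow> \<pi> k < n"
  using \<pi>_low J_subset \<pi>_high(1) unfolding C_def by (cases "k < m") auto

lemma \<pi>_in_J_iff: "k < n \<Longrightarrow> \<pi> k \<in> J \<longleftrightarrow> k < m"
  using \<pi>_low \<pi>_high(1) unfolding C_def by (cases "k < m") auto

lemma \<pi>_inj: "inj_on \<pi> {..<n}"
proof
  fix k k' assume kk': "k \<in> {..<n}" "k' \<in> {..<n}" "\<pi> k = \<pi> k'"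
  then have same_side: "k < m \<longleftrightarrow> k' < m"
    using \<pi>_in_J_iff[of k] \<pi>_in_J_iff[of k'] by simp
  show "k = k'"
  proof (cases "k < m")
    case True
    then show ?thesis
      using kk'(3) same_side \<tau>2_col_inj unfolding \<pi>_def inj_on_def by auto
  next
    case False
    then have "\<sigma> k = \<sigma> k'"
      using kk' same_side \<pi>_high(2)[of k] \<pi>_high(2)[of k'] by simp
    then show ?thesis
      using permutes_inj[OF \<sigma>_permutes] by (simp add: inj_eq)
  qed
qed

lemma \<pi>_permutes: "\<pi> permutes {..<n}"
proof (rule bij_imp_permutes)
  have "\<pi> ` {..<n} \<subseteq> {..<n}"
    using \<pi>_less by auto
  then show "bij_betw \<pi> {..<n} {..<n}"
    unfolding bij_betw_def using \<pi>_inj by (simp add: endo_inj_surj)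
qed (use m_le in \<open>auto simp: \<pi>_def\<close>)

lemma \<tau>1_nonzero_at_\<pi>: "m \<le> k \<Longrightarrow> k < n \<Longrightarrow> \<tau>1 $$ (\<sigma> k, \<pi> k) \<noteq> 0"
  using \<tau>1_row(2)[OF \<pi>_high(1)] \<pi>_high(2) by simp

lemma \<epsilon>_sign:
  assumes k: "k < n"
  shows "\<epsilon> k \<in> {1,-1}"
proof (cases "k < m")
  case True
  then show ?thesis
    using SPP_entry[OF \<tau>2 \<sigma>_less[OF k] \<pi>_less[OF k]] \<pi>_low[OF True] unfolding \<epsilon>_def by auto
next
  case False
  then show ?thesis
    using SPP_entry[OF \<tau>1 \<sigma>_less[OF k] \<pi>_less[OF k]] \<tau>1_nonzero_at_\<pi>[OF _ k] unfolding \<epsilon>_def by auto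
qed

lemma \<tau>1_upper_right_zero: "i < m \<Longrightarrow> m \<le> j \<Longrightarrow> j < n \<Longrightarrow> \<tau>1 $$ (\<sigma> i, \<pi> j) = 0"
  using \<tau>1_zero_outside_J \<pi>_high(1) \<pi>_less unfolding C_def by blast

lemma \<tau>1_lower_off_diagonal_zero:
  assumes "m \<le> i" "i < n" "j < n" "j \<noteq> i"
  shows "\<tau>1 $$ (\<sigma> i, \<pi> j) = 0"
proof (rule ccontr)
  assume "\<tau>1 $$ (\<sigma> i, \<pi> j) \<noteq> 0"
  then have "\<pi> j = \<pi> i"
    using SPP_row_unique[OF \<tau>1 \<sigma>_less \<pi>_less \<pi>_less] \<tau>1_nonzero_at_\<pi> assms by blast
  then show False
    using permutes_inj[OF \<pi>_permutes] assms(4) by (simp add: inj_eq)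
qed

lemma \<tau>2_off_diagonal_zero:
  assumes "i < m" "j < n" "j \<noteq> i"
  shows "\<tau>2 $$ (\<sigma> i, \<pi> j) = 0"
proof (rule ccontr)
  assume nonzero: "\<tau>2 $$ (\<sigma> i, \<pi> j) \<noteq> 0"
  have "i < n"
    using assms(1) m_le by simp
  then have "\<pi> j = \<pi> i"
    using SPP_row_unique[OF \<tau>2 \<sigma>_less[OF \<open>i < n\<close>] \<pi>_less[OF assms(2)] \<pi>_less[OF \<open>i < n\<close>] nonzero]
      \<pi>_low[OF assms(1)] by blast
  then show False
    using permutes_inj[OF \<pi>_permutes] assms(3) by (simp add: inj_eq)
qed

definition \<tau>0 :: "int mat" where
  "\<tau>0 = mat m m (\<lambda>(i,j). \<tau>1 $$ (\<sigma> i, \<pi> j) * \<epsilon> j)"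

lemma \<tau>0_carrier: "\<tau>0 \<in> carrier_mat m m"
  unfolding \<tau>0_def by simp

lemma column_product_at_\<pi>:
  assumes i: "i < m" and c: "c < n"
  shows "(\<Sum>r<n. \<tau>1 $$ (r,c) * \<tau>2 $$ (r, \<pi> i)) = \<tau>1 $$ (\<sigma> i, c) * \<epsilon> i"
proof -
  have "i < n"
    using i m_le by simp
  have "(\<Sum>r<n. \<tau>1 $$ (r,c) * \<tau>2 $$ (r, \<pi> i)) = \<tau>1 $$ (\<sigma> i, c) * \<tau>2 $$ (\<sigma> i, \<pi> i)"
  proof (rule sum_eq_single)
    fix r assume "r \<in> {..<n}" "r \<noteq> \<sigma> i"
    then show "\<tau>1 $$ (r,c) * \<tau>2 $$ (r, \<pi> i) = 0"
      using SPP_col_unique[OF \<tau>2 _ \<sigma>_less[OF \<open>i < n\<close>] \<pi>_less[OF \<open>i < n\<close>], of r] \<pi>_low[OF i] by auto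
  qed (use \<sigma>_less[OF \<open>i < n\<close>] in auto)
  then show ?thesis
    unfolding \<epsilon>_def using i by simp
qed

lemma \<tau>0_index: "i < m \<Longrightarrow> j < m \<Longrightarrow> \<tau>0 $$ (i,j) = \<tau>1 $$ (\<sigma> i, \<pi> j) * \<epsilon> j"
  unfolding \<tau>0_def by simp

lemma \<tau>0_SPP: "\<tau>0 \<in> SPP m"
proof (rule SPPI[OF \<tau>0_carrier])
  have n: "i < m \<Longrightarrow> i < n" for i
    using m_le by simp
  show "\<tau>0 $$ (i,j) \<in> {-1,0,1}" if ij: "i < m" "j < m" for i j
    unfolding \<tau>0_index[OF ij]
    using SPP_entry[OF \<tau>1 \<sigma>_less[OF n[OF ij(1)]] \<pi>_less[OF n[OF ij(2)]]] \<epsilon>_sign[OF n[OF ij(2)]]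
    by auto
  show "j = j'" if "i < m" "j < m" "j' < m" "\<tau>0 $$ (i,j) \<noteq> 0" "\<tau>0 $$ (i,j') \<noteq> 0" for i j j'
  proof -
    have "\<pi> j = \<pi> j'"
      using that SPP_row_unique[OF \<tau>1 \<sigma>_less \<pi>_less \<pi>_less, OF n n n] \<tau>0_index by simp
    then show "j = j'"
      using permutes_inj[OF \<pi>_permutes] by (simp add: inj_eq)
  qed
  show "i = i'" if "i < m" "i' < m" "j < m" "\<tau>0 $$ (i,j) \<noteq> 0" "\<tau>0 $$ (i',j) \<noteq> 0" for i i' j
  proof -
    have "\<sigma> i = \<sigma> i'"
      using that SPP_col_unique[OF \<tau>1 \<sigma>_less \<sigma>_less \<pi>_less, OF n n n] \<tau>0_index by simp
    then show "i = i'"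
      using permutes_inj[OF \<sigma>_permutes] by (simp add: inj_eq)
  qed
qed

lemma \<tau>0_symmetric: "transpose_mat \<tau>0 = \<tau>0"
proof (rule eq_matI)
  fix i j assume "i < dim_row \<tau>0" "j < dim_col \<tau>0"
  then have ij: "i < m" "j < m"
    using \<tau>0_carrier by auto
  then have ij_n: "i < n" "j < n"
    using m_le by auto
  have swap: "\<tau>1 $$ (\<sigma> i, \<pi> j) * \<epsilon> i = \<tau>1 $$ (\<sigma> j, \<pi> i) * \<epsilon> j"
    using symmetric_entry[OF \<pi>_less[OF ij_n(2)] \<pi>_less[OF ij_n(1)]]
      column_product_at_\<pi>[OF ij(1) \<pi>_less[OF ij_n(2)]] column_product_at_\<pi>[OF ij(2) \<pi>_less[OF ij_n(1)]]
    by simp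
  have ii: "\<epsilon> i * \<epsilon> i = 1" and jj: "\<epsilon> j * \<epsilon> j = 1"
    using sign_square \<epsilon>_sign ij_n by auto
  have "\<tau>1 $$ (\<sigma> i, \<pi> j) * \<epsilon> j = \<tau>1 $$ (\<sigma> i, \<pi> j) * \<epsilon> j * (\<epsilon> i * \<epsilon> i)"
    using ii by simp
  also have "\<dots> = (\<tau>1 $$ (\<sigma> i, \<pi> j) * \<epsilon> i) * \<epsilon> i * \<epsilon> j"
    by (simp add: algebra_simps)
  also have "\<dots> = \<tau>1 $$ (\<sigma> j, \<pi> i) * \<epsilon> i * (\<epsilon> j * \<epsilon> j)"
    unfolding swap by (simp add: algebra_simps)
  finally have "\<tau>1 $$ (\<sigma> i, \<pi> j) * \<epsilon> j = \<tau>1 $$ (\<sigma> j, \<pi> i) * \<epsilon> i"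
    using jj by simp
  then show "transpose_mat \<tau>0 $$ (i,j) = \<tau>0 $$ (i,j)"
    using ij \<tau>0_carrier \<tau>0_index by simp
qed (use \<tau>0_carrier in auto)

lemma \<tau>0_SPI: "\<tau>0 \<in> SPI m"
  unfolding SPI_def using \<tau>0_SPP \<tau>0_symmetric by simp

lemma \<tau>1_mult_signed_perm: "\<tau>1 * monomial_mat n \<pi> \<epsilon> = PhiI_upper n I \<tau>0"
proof (rule eq_mat_on_permuted_rowsI[OF _ PhiI_upper_carrier[OF I \<tau>0_carrier] \<sigma>_permutes])
  show "\<tau>1 * monomial_mat n \<pi> \<epsilon> \<in> carrier_mat n n"
    using SPP_carrier[OF \<tau>1] by (intro mult_carrier_mat) auto
  fix k j assume kj: "k < n" "j < n"
  have "(\<tau>1 * monomial_mat n \<pi> \<epsilon>) $$ (\<sigma> k, j) = \<tau>1 $$ (\<sigma> k, \<pi> j) * \<epsilon> j"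
    by (rule mult_monomial_mat_index[where p = \<pi>, OF SPP_carrier[OF \<tau>1] \<sigma>_less[OF kj(1)] kj(2) \<pi>_less[OF kj(2)]])
  also have "\<dots> = PhiI_upper n I \<tau>0 $$ (\<sigma> k, j)"
  proof (cases "k < m")
    case True
    then show ?thesis
      unfolding PhiI_upper_index[OF I \<tau>0_carrier kj]
      using \<tau>1_upper_right_zero[OF True _ kj(2)] by (simp add: \<tau>0_def)
  next
    case False
    then show ?thesis
      unfolding PhiI_upper_index[OF I \<tau>0_carrier kj]
      using \<tau>1_lower_off_diagonal_zero[OF _ kj(1,2)] sign_square[OF \<epsilon>_sign[OF kj(1)]]
      by (auto simp: \<epsilon>_def)
  qed
  finally show "(\<tau>1 * monomial_mat n \<pi> \<epsilon>) $$ (\<sigma> k, j) = PhiI_upper n I \<tau>0 $$ (\<sigma> k, j)" .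
qed

lemma \<tau>2_mult_signed_perm: "\<tau>2 * monomial_mat n \<pi> \<epsilon> = PhiI_lower n I"
proof (rule eq_mat_on_permuted_rowsI[OF _ PhiI_lower_carrier[OF I] \<sigma>_permutes])
  show "\<tau>2 * monomial_mat n \<pi> \<epsilon> \<in> carrier_mat n n"
    using SPP_carrier[OF \<tau>2] by (intro mult_carrier_mat) auto
  fix k j assume kj: "k < n" "j < n"
  have "(\<tau>2 * monomial_mat n \<pi> \<epsilon>) $$ (\<sigma> k, j) = \<tau>2 $$ (\<sigma> k, \<pi> j) * \<epsilon> j"
    by (rule mult_monomial_mat_index[where p = \<pi>, OF SPP_carrier[OF \<tau>2] \<sigma>_less[OF kj(1)] kj(2) \<pi>_less[OF kj(2)]])
  also have "\<dots> = PhiI_lower n I $$ (\<sigma> k, j)"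
  proof (cases "k < m")
    case True
    then show ?thesis
      unfolding PhiI_lower_index[OF I kj]
      using \<tau>2_off_diagonal_zero[OF True kj(2)] sign_square[OF \<epsilon>_sign[OF kj(1)]]
      by (auto simp: \<epsilon>_def)
  next
    case False
    then show ?thesis
      unfolding PhiI_lower_index[OF I kj]
      using \<tau>2_row_zero[OF _ kj(1) \<pi>_less[OF kj(2)]] by simp
  qed
  finally show "(\<tau>2 * monomial_mat n \<pi> \<epsilon>) $$ (\<sigma> k, j) = PhiI_lower n I $$ (\<sigma> k, j)" .
qed

end

lemma PhiI_surjective_mod_Omega_rel:
  assumes I: "I \<subseteq> {..<n}" and \<omega>: "\<omega> \<in> OmegaI n I"
  shows "\<exists>\<tau>\<in>SPI (card I). (PhiI n I \<tau>, \<omega>) \<in> Omega_rel n I"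
proof -
  obtain \<tau>1 \<tau>2 where \<omega>_eq: "\<omega> = \<tau>1 @\<^sub>r \<tau>2" and t: "\<tau>1 \<in> SPP n" "\<tau>2 \<in> SPP n"
    "transpose_mat (transpose_mat \<tau>1 * \<tau>2) = transpose_mat \<tau>1 * \<tau>2"
    "int_rank (\<tau>1 @\<^sub>r \<tau>2) = n" "ech \<tau>2 = I"
    using \<omega> by (rule OmegaI_E)
  interpret OmegaI_member n I \<tau>1 \<tau>2
    using I t by unfold_locales
  let ?G = "monomial_mat n \<pi> \<epsilon>"
  have G: "?G \<in> signed_perms n"
    using \<epsilon>_sign by (intro monomial_mat_in_signed_perms[OF \<pi>_permutes]) simp
  have "dblock n (1\<^sub>m n) * \<omega> * ?G = (\<tau>1 * ?G) @\<^sub>r (\<tau>2 * ?G)"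
    unfolding \<omega>_eq dblock_one using SPP_carrier[OF t(1)] SPP_carrier[OF t(2)]
    by (subst left_mult_one_mat[of _ "n + n" n])
      (auto intro: append_rows_mult[OF SPP_carrier[OF t(1)] SPP_carrier[OF t(2)] monomial_mat_carrier])
  also have "\<dots> = PhiI n I \<tau>0"
    unfolding \<tau>1_mult_signed_perm \<tau>2_mult_signed_perm PhiI_eq_append_rows[OF I \<tau>0_carrier] ..
  finally have "(\<omega>, PhiI n I \<tau>0) \<in> Omega_rel n I"
    by (intro Omega_relI[OF \<omega> PhiI_in_OmegaI[OF I \<tau>0_SPI] sign_diags_one G]) simp
  then show ?thesis
    using \<tau>0_SPI equiv_Omega_rel[of n I] unfolding equiv_def sym_def by blast
qed

theorem proposition5p3:
  fixes n :: nat and I :: "nat set"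
  assumes "I \<subseteq> {..<n}"
  shows "PhiI n I ` SPI (card I) \<subseteq> OmegaI n I
    \<and> (\<forall>\<tau> \<tau>'. (\<tau>, \<tau>') \<in> SPI_rel (card I) \<longrightarrow> (PhiI n I \<tau>, PhiI n I \<tau>') \<in> Omega_rel n I)
    \<and> bij_betw (\<lambda>X. Omega_rel n I `` (PhiI n I ` X))
        (SPI (card I) // SPI_rel (card I)) (OmegaI n I // Omega_rel n I)"
  using PhiI_in_OmegaI[OF assms] PhiI_respects_SPI_rel[OF assms]
    bij_betw_quotient_map[OF equiv_SPI_rel equiv_Omega_rel PhiI_in_OmegaI[OF assms]
      PhiI_respects_SPI_rel[OF assms] PhiI_reflects_Omega_rel[OF assms]
      PhiI_surjective_mod_Omega_rel[OF assms]]
  by blast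

end
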